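(* Fix $k\ge0$. Let $\Omega\subset\mathbb{R}^d$ be compact with $[-r,r]^d\subseteq\Omega$ for some $r>0$, and let $\mathbf{z}=(z_\alpha)_{\|\alpha\|_1\le k}\in\mathbb{R}^{\binom{k+d}{d}}$ be arbitrary. Then the problem $$\inf_{\mu\in\mathcal{M}(\Omega)}\|\mu\|_{\mathrm{TV}}\quad\text{subject to}\quad\int_\Omega x^\alpha\,d\mu(x)=z_\alpha\ \text{ for all }\|\alpha\|_1\le k$$ has a solution, and every solution $\mu^*$ satisfies $\|\mu^*\|_{\mathrm{TV}}\le e^{2dk/r}\|\mathbf{z}\|_\infty$.
   Context: $\mathcal{M}(\Omega)$: signed Radon measures on $\Omega$ with finite total variation, $\|\cdot\|_{\mathrm{TV}}$ the total variation norm. Multi-index notation $x^\alpha=x_1^{\alpha_1}\cdots x_d^{\alpha_d}$, $\|\alpha\|_1=\sum_i\alpha_i$; $\|\mathbf{z}\|_\infty=\max_\alpha|z_\alpha|$. *)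

theory Defs
  imports "HOL-Analysis.Analysis"
begin

text \<open>Points of R^d are vectors real^'d (d = CARD('d)). Multi-indices are
functions 'd \<Rightarrow> nat; |alpha|_1 = sum over coordinates.\<close>

definition multi_indices :: "nat \<Rightarrow> ('d::finite \<Rightarrow> nat) set" where
  "multi_indices k = {\<alpha>. (\<Sum>i\<in>UNIV. \<alpha> i) \<le> k}"

definition monomial :: "('d::finite \<Rightarrow> nat) \<Rightarrow> real^'d \<Rightarrow> real" where
  "monomial \<alpha> x = (\<Prod>i\<in>UNIV. (x $ i) ^ (\<alpha> i))"

text \<open>A finite signed (Radon) measure on the compact set Omega, represented by its
Jordan decomposition: a pair of mutually singular finite Borel measures on Omega.\<close>

definition signed_measure_on ::
  "(real^'d::finite) set \<Rightarrow> (real^'d) measure \<times> (real^'d) measure \<Rightarrow> bool" where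
  "signed_measure_on \<Omega> \<mu> \<longleftrightarrow>
     sets (fst \<mu>) = sets (restrict_space borel \<Omega>) \<and>
     sets (snd \<mu>) = sets (restrict_space borel \<Omega>) \<and>
     finite_measure (fst \<mu>) \<and> finite_measure (snd \<mu>) \<and>
     (\<exists>P \<in> sets (restrict_space borel \<Omega>).
        emeasure (fst \<mu>) (\<Omega> - P) = 0 \<and> emeasure (snd \<mu>) P = 0)"

definition tv_norm :: "(real^'d::finite) set \<Rightarrow> (real^'d) measure \<times> (real^'d) measure \<Rightarrow> real" where
  "tv_norm \<Omega> \<mu> = measure (fst \<mu>) \<Omega> + measure (snd \<mu>) \<Omega>"

definition signed_integral ::
  "(real^'d::finite) measure \<times> (real^'d) measure \<Rightarrow> (real^'d \<Rightarrow> real) \<Rightarrow> real" where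
  "signed_integral \<mu> f = (\<integral>x. f x \<partial>(fst \<mu>)) - (\<integral>x. f x \<partial>(snd \<mu>))"

definition moment_sup_norm :: "nat \<Rightarrow> (('d::finite \<Rightarrow> nat) \<Rightarrow> real) \<Rightarrow> real" where
  "moment_sup_norm k z = Max ((\<lambda>\<alpha>. \<bar>z \<alpha>\<bar>) ` multi_indices k)"

end

theory Submission
  imports Defs "HOL-Computational_Algebra.Polynomial"
begin

text \<open>In one variable the functionals \<open>p \<mapsto> coeff p j\<close>, \<open>j \<le> k\<close>, on polynomials of
  degree \<open>\<le> k\<close> are integrals against atomic measures on \<open>[-r, r]\<close> supported at scaled
  Chebyshev nodes (Lagrange interpolation), and Markov's coefficient inequality bounds their
  total masses by \<open>e\<^sup>2\<^sup>k\<^sup>/\<^sup>r\<close> altogether. Tensor products of these measures, weighted by \<open>z\<close>,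
  give a feasible measure on \<open>[-r, r]\<^sup>d\<close> of total variation at most \<open>e\<^sup>2\<^sup>d\<^sup>k\<^sup>/\<^sup>r \<parallel>z\<parallel>\<^sub>\<infinity>\<close>,
  so every minimiser obeys this bound.

  Uniform continuity approximates every feasible measure, in its finitely many
  moments, by atomic measures of no larger total variation, and a Caratheodory-type argument
  reduces the number of atoms to the number \<open>N\<close> of moments. Along a minimising sequence the
  \<open>N\<close> atoms and their weights range over a compact set; a convergent subsequence yields an
  atomic measure with the exact moments and minimal total variation.\<close>

section \<open>Chebyshev polynomials\<close>

fun chebyshev :: "nat \<Rightarrow> real poly" where
  "chebyshev 0 = 1"
| "chebyshev (Suc 0) = [:0, 1:]"
| "chebyshev (Suc (Suc n)) = [:0, 2:] * chebyshev (Suc n) - chebyshev n"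

lemma poly_chebyshev_cos: "poly (chebyshev n) (cos t) = cos (real n * t)"
proof (induction n rule: chebyshev.induct)
  case (3 n)
  have "cos (real (Suc (Suc n)) * t) = 2 * cos t * cos (real (Suc n) * t) - cos (real n * t)"
  proof -
    have a: "real (Suc (Suc n)) * t = real (Suc n) * t + t" by (simp add: algebra_simps)
    have b: "real n * t = real (Suc n) * t - t" by (simp add: algebra_simps)
    show ?thesis unfolding a b cos_add cos_diff by (simp add: algebra_simps)
  qed
  then show ?case using 3 by simp
qed simp_all

lemma degree_chebyshev: "degree (chebyshev n) \<le> n"
proof (induction n rule: chebyshev.induct)
  case (3 n)
  have "degree ([:0, 2:] * chebyshev (Suc n)) \<le> Suc (Suc n)"
    using degree_mult_le[of "[:0,2:]" "chebyshev (Suc n)"] 3(1) by simp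
  moreover have "degree (chebyshev n) \<le> Suc (Suc n)" using 3(2) by simp
  ultimately show ?case by (simp add: degree_diff_le)
qed auto

lemma coeff_chebyshev_Suc_Suc:
  "coeff (chebyshev (Suc (Suc n))) 0 = - coeff (chebyshev n) 0"
  "coeff (chebyshev (Suc (Suc n))) (Suc j) = 2 * coeff (chebyshev (Suc n)) j - coeff (chebyshev n) (Suc j)"
  by (simp_all add: coeff_pCons)

lemma coeff_chebyshev_sign:
  "(odd (n + j) \<longrightarrow> coeff (chebyshev n) j = 0) \<and> (-1) ^ ((n - j) div 2) * coeff (chebyshev n) j \<ge> 0"
proof (induction n arbitrary: j rule: chebyshev.induct)
  case 1 then show ?case by (cases j) auto
next
  case 2 then show ?case by (cases j) (auto simp: coeff_pCons split: nat.splits)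
next
  case (3 n)
  show ?case
  proof (cases j)
    case 0
    have e: "(Suc (Suc n) - 0) div 2 = Suc (n div 2)" by simp
    show ?thesis using 3(2)[of 0] unfolding 0 coeff_chebyshev_Suc_Suc e by simp
  next
    case (Suc i)
    have par: "odd (Suc (Suc n) + Suc i) \<Longrightarrow> coeff (chebyshev (Suc n)) i = 0 \<and> coeff (chebyshev n) (Suc i) = 0"
      using 3(1)[of i] 3(2)[of "Suc i"] by simp
    have sgn1: "(-1) ^ ((Suc n - i) div 2) * coeff (chebyshev (Suc n)) i \<ge> 0" using 3(1)[of i] by simp
    have sgn2: "(-1) ^ ((Suc n - i) div 2) * coeff (chebyshev n) (Suc i) \<le> 0"
    proof (cases "Suc i \<le> n")
      case True
      then have "(Suc n - i) div 2 = Suc ((n - Suc i) div 2)" by (simp add: Suc_diff_le)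
      then show ?thesis using 3(2)[of "Suc i"] by simp
    next
      case False
      then show ?thesis using degree_chebyshev[of n] by (simp add: coeff_eq_0)
    qed
    have "(Suc (Suc n) - Suc i) div 2 = (Suc n - i) div 2" by simp
    then show ?thesis unfolding Suc coeff_chebyshev_Suc_Suc using par sgn1 sgn2 by (auto simp: algebra_simps)
  qed
qed

text \<open>\<open>chebyshev_abs n\<close> is \<open>i\<^sup>-\<^sup>n T\<^sub>n(i t)\<close>, where \<open>T\<^sub>n = chebyshev n\<close>.\<close>

fun chebyshev_abs :: "nat \<Rightarrow> real poly" where
  "chebyshev_abs 0 = 1"
| "chebyshev_abs (Suc 0) = [:0, 1:]"
| "chebyshev_abs (Suc (Suc n)) = [:0, 2:] * chebyshev_abs (Suc n) + chebyshev_abs n"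

lemma coeff_chebyshev_abs: "coeff (chebyshev_abs n) j = \<bar>coeff (chebyshev n) j\<bar>"
proof (induction n arbitrary: j rule: chebyshev.induct)
  case 1 then show ?case by (cases j) auto
next
  case 2 then show ?case by (cases j) (auto simp: coeff_pCons split: nat.splits)
next
  case (3 n)
  show ?case
  proof (cases j)
    case 0
    then show ?thesis using 3(2)[of 0] by (simp add: coeff_chebyshev_Suc_Suc)
  next
    case (Suc i)
    have sgn1: "(-1) ^ ((Suc n - i) div 2) * coeff (chebyshev (Suc n)) i \<ge> 0"
      using coeff_chebyshev_sign[of "Suc n" i] by simp
    have sgn2: "(-1) ^ ((Suc n - i) div 2) * coeff (chebyshev n) (Suc i) \<le> 0"
    proof (cases "Suc i \<le> n")
      case True
      then have "(Suc n - i) div 2 = Suc ((n - Suc i) div 2)" by (simp add: Suc_diff_le)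
      then show ?thesis using coeff_chebyshev_sign[of n "Suc i"] by simp
    next
      case False
      then show ?thesis using degree_chebyshev[of n] by (simp add: coeff_eq_0)
    qed
    have opposite: "\<bar>2 * a - b\<bar> = 2 * \<bar>a\<bar> + \<bar>b\<bar>" if "s * a \<ge> 0" "s * b \<le> 0" "s = 1 \<or> s = -1"
      for a b s :: real
      using that by (auto simp: abs_if)
    have "\<bar>coeff (chebyshev (Suc (Suc n))) (Suc i)\<bar> =
          2 * \<bar>coeff (chebyshev (Suc n)) i\<bar> + \<bar>coeff (chebyshev n) (Suc i)\<bar>"
      unfolding coeff_chebyshev_Suc_Suc
      by (rule opposite[OF sgn1 sgn2]) (simp add: minus_one_power_iff)
    then show ?thesis using 3 unfolding Suc by (simp add: coeff_pCons)
  qed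
qed

lemma degree_chebyshev_abs: "degree (chebyshev_abs n) \<le> n"
  using degree_chebyshev[of n] by (intro degree_le) (simp add: coeff_chebyshev_abs coeff_eq_0)

lemma poly_chebyshev_abs:
  fixes u :: real
  defines "\<rho> \<equiv> u + sqrt (1 + u\<^sup>2)" and "\<sigma> \<equiv> sqrt (1 + u\<^sup>2) - u"
  shows "poly (chebyshev_abs n) u = (\<rho> ^ n + (-\<sigma>) ^ n) / 2"
proof (induction n rule: chebyshev_abs.induct)
  case (3 n)
  have s2: "sqrt (1 + u\<^sup>2) ^ 2 = 1 + u\<^sup>2" by (simp add: add_pos_nonneg)
  have sq: "\<rho> * \<rho> = 2 * u * \<rho> + 1" "(-\<sigma>) * (-\<sigma>) = 2 * u * (-\<sigma>) + 1"
    using s2 by (simp_all add: \<rho>_def \<sigma>_def algebra_simps power2_eq_square)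
  have roots: "y ^ Suc (Suc n) = 2 * u * y ^ Suc n + y ^ n" if "y * y = 2 * u * y + 1" for y
  proof -
    have "y ^ Suc (Suc n) = (y * y) * y ^ n" by simp
    then show ?thesis using that by (simp add: algebra_simps)
  qed
  have "poly (chebyshev_abs (Suc (Suc n))) u = 2 * u * poly (chebyshev_abs (Suc n)) u + poly (chebyshev_abs n) u"
    by simp
  also have "\<dots> = 2 * u * ((\<rho> ^ Suc n + (-\<sigma>) ^ Suc n) / 2) + (\<rho> ^ n + (-\<sigma>) ^ n) / 2"
    using 3 by (simp only:)
  also have "\<dots> = ((2 * u * \<rho> ^ Suc n + \<rho> ^ n) + (2 * u * (-\<sigma>) ^ Suc n + (-\<sigma>) ^ n)) / 2"
    by (simp add: field_simps)
  also have "\<dots> = (\<rho> ^ Suc (Suc n) + (-\<sigma>) ^ Suc (Suc n)) / 2"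
    using roots[OF sq(1)] roots[OF sq(2)] by simp
  finally show ?case .
qed (simp_all add: \<rho>_def \<sigma>_def)

lemma add_sqrt_one_plus_square_le_exp: "(u::real) \<ge> 0 \<Longrightarrow> u + sqrt (1 + u\<^sup>2) \<le> exp u"
proof -
  assume u: "u \<ge> 0"
  have "sqrt (1 + u\<^sup>2) \<le> 1 + u\<^sup>2 / 2"
    by (rule real_le_lsqrt) (auto simp: power2_eq_square algebra_simps add_nonneg_nonneg u)
  then show ?thesis using exp_lower_Taylor_quadratic[OF u] by simp
qed

lemma power_add_Suc_reciprocal_le:
  fixes \<rho> \<sigma> :: real
  assumes r1: "\<rho> \<ge> 1" and rs: "\<rho> * \<sigma> = 1" and k: "k \<ge> 1"
  shows "(\<rho> ^ k + (-\<sigma>) ^ k) / 2 + (\<rho> ^ Suc k + (-\<sigma>) ^ Suc k) / 2 \<le> \<rho> ^ (2 * k)"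
proof -
  have "\<sigma> = 1 / \<rho>" using rs r1 by (auto simp: field_simps)
  then have sg0: "\<sigma> \<ge> 0" and sg1: "\<sigma> \<le> 1" using r1 by auto
  have a: "\<rho> ^ Suc k \<le> \<rho> ^ (2 * k)" using r1 k by (intro power_increasing) auto
  have b: "(-\<sigma>) ^ k + (-\<sigma>) ^ Suc k \<le> 1 - \<sigma>"
  proof -
    have "(-\<sigma>) ^ k + (-\<sigma>) ^ Suc k = (-\<sigma>) ^ k * (1 - \<sigma>)" by (simp add: algebra_simps)
    also have "\<dots> \<le> \<bar>(-\<sigma>) ^ k\<bar> * (1 - \<sigma>)" using sg1 by (intro mult_right_mono abs_ge_self) auto
    also have "\<bar>(-\<sigma>) ^ k\<bar> = \<sigma> ^ k" using sg0 by (simp add: power_abs)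
    also have "\<sigma> ^ k * (1 - \<sigma>) \<le> 1 * (1 - \<sigma>)" using sg0 sg1 by (intro mult_right_mono power_le_one) auto
    finally show ?thesis by simp
  qed
  have c: "\<rho> ^ k + (1 - \<sigma>) \<le> \<rho> ^ (2 * k)"
  proof -
    have "(\<rho> - 1) * (1 - \<sigma>) \<ge> 0" using r1 sg1 by simp
    then have "1 - \<sigma> \<le> \<rho> - 1" using rs by (simp add: algebra_simps)
    also have "\<rho> - 1 \<le> \<rho> ^ k - 1" using r1 k by (simp add: power_increasing[of 1 k \<rho>, simplified])
    also have "\<rho> ^ k - 1 \<le> \<rho> ^ k * (\<rho> ^ k - 1)"
      using r1 by (intro mult_right_mono[of 1 "\<rho> ^ k", simplified]) (auto simp: one_le_power)
    also have "\<rho> ^ k * (\<rho> ^ k - 1) = \<rho> ^ (2 * k) - \<rho> ^ k"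
      by (simp add: algebra_simps power_mult power2_eq_square mult_2 power_add)
    finally show ?thesis by simp
  qed
  show ?thesis using a b c by (simp add: field_simps)
qed

lemma poly_chebyshev_abs_add_Suc_le_exp:
  fixes u :: real
  assumes u: "u \<ge> 0" and k: "k \<ge> 1"
  shows "poly (chebyshev_abs k) u + poly (chebyshev_abs (Suc k)) u \<le> exp (2 * real k * u)"
proof -
  define \<rho> where "\<rho> = u + sqrt (1 + u\<^sup>2)"
  have "sqrt (1 + u\<^sup>2) \<ge> 1" by simp
  then have r1: "\<rho> \<ge> 1" unfolding \<rho>_def using u by linarith
  have "\<rho> * (sqrt (1 + u\<^sup>2) - u) = 1"
    unfolding \<rho>_def by (simp add: algebra_simps power2_eq_square add_pos_nonneg)
  then have "poly (chebyshev_abs k) u + poly (chebyshev_abs (Suc k)) u \<le> \<rho> ^ (2 * k)"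
    unfolding poly_chebyshev_abs \<rho>_def[symmetric] by (rule power_add_Suc_reciprocal_le[OF r1 _ k])
  also have "\<rho> ^ (2 * k) \<le> exp u ^ (2 * k)"
    using add_sqrt_one_plus_square_le_exp[OF u] r1 unfolding \<rho>_def by (intro power_mono) auto
  also have "exp u ^ (2 * k) = exp (2 * real k * u)" by (simp add: exp_of_nat_mult[symmetric] mult_ac)
  finally show ?thesis .
qed

section \<open>Lagrange interpolation at symmetric nodes\<close>

definition node_poly :: "(nat \<Rightarrow> real) \<Rightarrow> nat \<Rightarrow> nat \<Rightarrow> real poly" where
  "node_poly x K l = (\<Prod>m \<in> {0..K} - {l}. [:- x m, 1:])"

definition lagrange_basis :: "(nat \<Rightarrow> real) \<Rightarrow> nat \<Rightarrow> nat \<Rightarrow> real poly" where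
  "lagrange_basis x K l = smult (1 / poly (node_poly x K l) (x l)) (node_poly x K l)"

lemma poly_node_poly: "poly (node_poly x K l) t = (\<Prod>m \<in> {0..K} - {l}. t - x m)"
  by (simp add: node_poly_def poly_prod)

lemma degree_node_poly:
  assumes "l \<le> K"
  shows "degree (node_poly x K l) \<le> K"
proof -
  have "degree (node_poly x K l) \<le> (\<Sum>m \<in> {0..K} - {l}. degree [:- x m, 1:])"
    unfolding node_poly_def using degree_prod_sum_le[of "{0..K} - {l}" "\<lambda>m. [:- x m, 1:]"]
    by (simp add: o_def)
  also have "\<dots> \<le> K" using assms by (simp add: card_Diff_singleton)
  finally show ?thesis .
qed

lemma degree_lagrange_basis: "l \<le> K \<Longrightarrow> degree (lagrange_basis x K l) \<le> K"
  unfolding lagrange_basis_def using degree_node_poly degree_smult_le order.trans by blast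

lemma poly_lagrange_basis_node:
  assumes inj: "inj_on x {0..K}" and l: "l \<le> K" and m: "m \<le> K"
  shows "poly (lagrange_basis x K l) (x m) = (if l = m then 1 else 0)"
proof (cases "l = m")
  case True
  have "poly (node_poly x K l) (x l) \<noteq> 0"
    unfolding poly_node_poly using inj l by (auto simp: prod_zero_iff inj_on_def)
  then show ?thesis using True by (simp add: lagrange_basis_def)
next
  case False
  have "poly (node_poly x K l) (x m) = 0"
    unfolding poly_node_poly using False m by (intro prod_zero) auto
  then show ?thesis using False by (simp add: lagrange_basis_def)
qed

lemma lagrange_interpolation:
  assumes inj: "inj_on x {0..K}" and deg: "degree p \<le> K"
  shows "p = (\<Sum>l\<le>K. smult (poly p (x l)) (lagrange_basis x K l))"
proof (rule poly_eqI_degree[of "x ` {0..K}"])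
  fix t assume "t \<in> x ` {0..K}"
  then obtain m where m: "m \<le> K" "t = x m" by auto
  have "poly (\<Sum>l\<le>K. smult (poly p (x l)) (lagrange_basis x K l)) t =
        (\<Sum>l\<le>K. poly p (x l) * (if l = m then 1 else 0))"
    unfolding m(2) poly_sum poly_smult using poly_lagrange_basis_node[OF inj _ m(1)]
    by (intro sum.cong) auto
  also have "\<dots> = poly p t" using m by (simp add: if_distrib cong: if_cong)
  finally show "poly p t = poly (\<Sum>l\<le>K. smult (poly p (x l)) (lagrange_basis x K l)) t" by simp
next
  have card: "card (x ` {0..K}) = Suc K" using inj by (simp add: card_image)
  then show "degree p < card (x ` {0..K})" using deg by simp
  have "degree (\<Sum>l\<le>K. smult (poly p (x l)) (lagrange_basis x K l)) \<le> K"
    by (rule degree_sum_le) (auto intro: order.trans[OF degree_smult_le] degree_lagrange_basis)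
  then show "degree (\<Sum>l\<le>K. smult (poly p (x l)) (lagrange_basis x K l)) < card (x ` {0..K})"
    using card by simp
qed

lemma sum_coeff_lagrange_basis_power:
  assumes inj: "inj_on x {0..K}" and m: "m \<le> K"
  shows "(\<Sum>l\<le>K. coeff (lagrange_basis x K l) j * x l ^ m) = (if j = m then 1 else 0)"
proof -
  have "monom 1 m = (\<Sum>l\<le>K. smult (poly (monom 1 m) (x l)) (lagrange_basis x K l))"
    by (rule lagrange_interpolation[OF inj]) (simp add: degree_monom_eq m)
  then have "coeff (monom (1::real) m) j = coeff (\<Sum>l\<le>K. smult (x l ^ m) (lagrange_basis x K l)) j"
    by (simp add: poly_monom)
  then show ?thesis by (auto simp: coeff_sum coeff_monom mult.commute)
qed

lemma linear_factor_mult: "[:c, 1:] * p = smult c p + pCons 0 (p :: real poly)"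
  by (simp add: add.commute)

lemma shifted_square_mult: "[:- a, 0, 1:] * p = smult (- a) p + pCons 0 (pCons 0 (p :: real poly))"
  by (simp add: algebra_simps)

lemma degree_prod_shifted_squares:
  "degree (\<Prod>m\<in>B. [:- a m, 0, 1::real:]) \<le> 2 * card B"
proof (cases "finite B")
  case True
  have "degree (\<Prod>m\<in>B. [:- a m, 0, 1::real:]) \<le> (\<Sum>m\<in>B. degree [:- a m, 0, 1::real:])"
    using degree_prod_sum_le[OF True, of "\<lambda>m. [:- a m, 0, 1:]"] by (simp add: o_def)
  then show ?thesis by simp
qed simp

lemma coeff_prod_shifted_squares_odd:
  "finite B \<Longrightarrow> coeff (\<Prod>m\<in>B. [:- a m, 0, 1::real:]) (Suc (2 * i)) = 0"
proof (induction B arbitrary: i rule: finite_induct)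
  case (insert b B)
  then show ?case
    using insert.IH[of i] insert.IH[of "i - 1"] by (cases i) (simp_all add: shifted_square_mult)
qed simp

lemma coeff_prod_shifted_squares_sign:
  assumes "finite B" and "\<And>m. m \<in> B \<Longrightarrow> a m \<ge> 0"
  shows "(-1) ^ (card B - i) * coeff (\<Prod>m\<in>B. [:- a m, 0, 1::real:]) (2 * i) \<ge> 0"
  using assms
proof (induction B arbitrary: i rule: finite_induct)
  case empty
  then show ?case by (cases i) auto
next
  case (insert b B)
  let ?E = "\<Prod>m\<in>B. [:- a m, 0, 1::real:]"
  have eq: "(\<Prod>m\<in>insert b B. [:- a m, 0, 1::real:]) = smult (- a b) ?E + pCons 0 (pCons 0 ?E)"
    using insert.hyps by (simp add: shifted_square_mult)
  have card: "card (insert b B) = Suc (card B)" using insert.hyps by simp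
  have ab: "a b \<ge> 0" and IH: "\<And>i. (-1) ^ (card B - i) * coeff ?E (2 * i) \<ge> 0"
    using insert by auto
  show ?case
  proof (cases i)
    case 0
    have "(-1) ^ (card (insert b B) - i) * coeff (smult (- a b) ?E + pCons 0 (pCons 0 ?E)) (2 * i) =
          a b * ((-1) ^ card B * coeff ?E 0)"
      unfolding 0 card by simp
    then show ?thesis unfolding eq using IH[of 0] ab by simp
  next
    case (Suc i')
    have t1: "(-1) ^ (card (insert b B) - i) * coeff ?E (2 * i') \<ge> 0"
      using IH[of i'] Suc card by simp
    have t2: "(-1) ^ (card (insert b B) - i) * (- a b * coeff ?E (2 * i)) \<ge> 0"
    proof (cases "i \<le> card B")
      case True
      then have "(-1) ^ (card (insert b B) - i) * (- a b * coeff ?E (2 * i)) =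
                 a b * ((-1) ^ (card B - i) * coeff ?E (2 * i))"
        unfolding card by (simp add: Suc_diff_le)
      then show ?thesis using IH[of i] ab by simp
    next
      case False
      then have "coeff ?E (2 * i) = 0"
        using degree_prod_shifted_squares[of a B] by (intro coeff_eq_0) simp
      then show ?thesis by simp
    qed
    have "coeff (\<Prod>m\<in>insert b B. [:- a m, 0, 1::real:]) (2 * i) = - a b * coeff ?E (2 * i) + coeff ?E (2 * i')"
      unfolding eq Suc by simp
    then have "(-1) ^ (card (insert b B) - i) * coeff (\<Prod>m\<in>insert b B. [:- a m, 0, 1::real:]) (2 * i) =
        (-1) ^ (card (insert b B) - i) * (- a b * coeff ?E (2 * i)) + (-1) ^ (card (insert b B) - i) * coeff ?E (2 * i')"
      by (simp only: distrib_left)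
    then show ?thesis using t1 t2 by linarith
  qed
qed

lemma prod_pair_reflect:
  fixes f :: "nat \<Rightarrow> 'a::comm_monoid_mult"
  assumes A: "A \<subseteq> {0..K}" and symA: "\<And>m. m \<in> A \<Longrightarrow> K - m \<in> A"
  shows "(\<Prod>m\<in>A. f m) = (\<Prod>m\<in>{m\<in>A. 2 * m < K}. f m * f (K - m)) *
            (if even K \<and> K div 2 \<in> A then f (K div 2) else 1)"
proof -
  have fin: "finite A" using A finite_subset by blast
  let ?A1 = "{m\<in>A. 2 * m < K}" and ?A2 = "{m\<in>A. 2 * m > K}" and ?A3 = "{m\<in>A. 2 * m = K}"
  have split: "A = ?A1 \<union> ?A2 \<union> ?A3" by auto
  have "(\<Prod>m\<in>A. f m) = (\<Prod>m\<in>?A1. f m) * (\<Prod>m\<in>?A2. f m) * (\<Prod>m\<in>?A3. f m)"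
    using fin by (subst split, subst prod.union_disjoint, auto, subst prod.union_disjoint, auto)
  moreover have "?A2 = (\<lambda>m. K - m) ` ?A1"
  proof
    show "?A2 \<subseteq> (\<lambda>m. K - m) ` ?A1"
    proof
      fix m assume m: "m \<in> ?A2"
      then have "m \<le> K" using A by auto
      then have "m = K - (K - m)" by simp
      moreover have "K - m \<in> ?A1" using m symA \<open>m \<le> K\<close> by auto
      ultimately show "m \<in> (\<lambda>m. K - m) ` ?A1" by blast
    qed
    show "(\<lambda>m. K - m) ` ?A1 \<subseteq> ?A2" using symA by auto
  qed
  moreover have "inj_on (\<lambda>m. K - m) ?A1" using A by (auto simp: inj_on_def)
  moreover have "?A3 = (if even K \<and> K div 2 \<in> A then {K div 2} else {})" by auto
  ultimately show ?thesis by (simp add: prod.reindex prod.distrib)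
qed

lemma prod_reflected_pairs:
  assumes "\<And>m. m \<le> K \<Longrightarrow> x (K - m) = - x m" and "\<And>m. m \<in> S \<Longrightarrow> m \<le> K"
  shows "(\<Prod>m\<in>S. [:- x m, 1:] * [:- x (K - m), 1:]) = (\<Prod>m\<in>S. [:- (x m)\<^sup>2, 0, 1::real:])"
  using assms by (intro prod.cong refl) (simp add: power2_eq_square)

lemma node_poly_center:
  assumes sym: "\<And>m. m \<le> K \<Longrightarrow> x (K - m) = - x m" and l: "2 * l = K"
  shows "node_poly x K l = (\<Prod>m | 2 * m < K. [:- (x m)\<^sup>2, 0, 1:])"
proof -
  let ?A = "{0..K} - {l}"
  have "node_poly x K l = (\<Prod>m\<in>{m\<in>?A. 2 * m < K}. [:- x m, 1:] * [:- x (K - m), 1:]) *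
          (if even K \<and> K div 2 \<in> ?A then [:- x (K div 2), 1:] else 1)"
    unfolding node_poly_def by (rule prod_pair_reflect) (use l in auto)
  also have "(if even K \<and> K div 2 \<in> ?A then [:- x (K div 2), 1:] else 1) = 1" using l by auto
  also have "{m\<in>?A. 2 * m < K} = {m. 2 * m < K}" using l by auto
  also have "(\<Prod>m | 2 * m < K. [:- x m, 1:] * [:- x (K - m), 1:]) = (\<Prod>m | 2 * m < K. [:- (x m)\<^sup>2, 0, 1:])"
    using sym by (intro prod_reflected_pairs) auto
  finally show ?thesis by simp
qed

lemma node_poly_off_center:
  assumes sym: "\<And>m. m \<le> K \<Longrightarrow> x (K - m) = - x m" and l: "l \<le> K" "2 * l \<noteq> K"
  shows "node_poly x K l = [:x l, 1:] * ((\<Prod>m\<in>{m. 2 * m < K} - {min l (K - l)}. [:- (x m)\<^sup>2, 0, 1:]) *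
           (if even K then [:0, 1:] else 1))"
proof -
  let ?A = "{0..K} - {l, K - l}"
  have "node_poly x K l = [:- x (K - l), 1:] * (\<Prod>m\<in>?A. [:- x m, 1:])"
  proof -
    have "K - l \<in> {0..K} - {l}" using l by auto
    then have "node_poly x K l = [:- x (K - l), 1:] * (\<Prod>m\<in>{0..K} - {l} - {K - l}. [:- x m, 1:])"
      unfolding node_poly_def by (rule prod.remove[rotated]) simp
    moreover have "{0..K} - {l} - {K - l} = ?A" by auto
    ultimately show ?thesis by simp
  qed
  also have "(\<Prod>m\<in>?A. [:- x m, 1:]) = (\<Prod>m\<in>{m\<in>?A. 2 * m < K}. [:- x m, 1:] * [:- x (K - m), 1:]) *
            (if even K \<and> K div 2 \<in> ?A then [:- x (K div 2), 1:] else 1)"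
    by (rule prod_pair_reflect) (use l in auto)
  also have "{m\<in>?A. 2 * m < K} = {m. 2 * m < K} - {min l (K - l)}" using l by auto
  also have "(\<Prod>m\<in>{m. 2 * m < K} - {min l (K - l)}. [:- x m, 1:] * [:- x (K - m), 1:]) =
      (\<Prod>m\<in>{m. 2 * m < K} - {min l (K - l)}. [:- (x m)\<^sup>2, 0, 1:])"
    using sym by (intro prod_reflected_pairs) auto
  also have "(if even K \<and> K div 2 \<in> ?A then [:- x (K div 2), 1:] else 1) = (if even K then [:0, 1:] else 1)"
  proof (cases "even K")
    case True
    then have "K div 2 \<in> ?A" using l by auto
    moreover have "K - K div 2 = K div 2" using True by auto
    then have "x (K div 2) = 0" using sym[of "K div 2"] by simp
    ultimately show ?thesis using True by simp
  qed simp
  finally show ?thesis using sym[OF l(1)] by simp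
qed

lemma card_double_less: "card {m::nat. 2 * m < K} = (K + 1) div 2"
proof -
  have "{m::nat. 2 * m < K} = {..<(K + 1) div 2}" by auto
  then show ?thesis by simp
qed

lemma coeff_linear_factor_mult:
  "coeff ([:c, 1:] * p) j = c * coeff p j + (if j = 0 then 0 else coeff (p :: real poly) (j - 1))"
  unfolding linear_factor_mult by (cases j) simp_all

lemma coeff_node_poly_off_center_sign:
  assumes sym: "\<And>m. m \<le> K \<Longrightarrow> x (K - m) = - x m"
    and l: "l \<le> K" "2 * l \<noteq> K" and par: "even (K + j)"
  shows "(-1) ^ ((K - j) div 2) * coeff (node_poly x K l) j \<ge> 0"
proof -
  let ?B = "{m. 2 * m < K} - {min l (K - l)}"
  let ?E = "\<Prod>m\<in>?B. [:- (x m)\<^sup>2, 0, 1:]"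
  have finB: "finite ?B" by (rule finite_subset[of _ "{..<K}"]) auto
  have "min l (K - l) \<in> {m. 2 * m < K}" "finite {m::nat. 2 * m < K}"
    using l by (auto intro: finite_subset[of _ "{..<K}"])
  then have cardB: "card ?B = (K + 1) div 2 - 1" by (simp add: card_double_less)
  note odd = coeff_prod_shifted_squares_odd[OF finB]
  have sign: "(-1) ^ ((K + 1) div 2 - 1 - i) * coeff ?E (2 * i) \<ge> 0" for i
    using coeff_prod_shifted_squares_sign[OF finB] unfolding cardB by simp
  have node: "node_poly x K l = [:x l, 1:] * (?E * (if even K then [:0, 1:] else 1))"
    using sym l by (rule node_poly_off_center)
  show ?thesis
  proof (cases "even K")
    case True
    obtain h where h: "K = 2 * h" using True by (rule evenE)
    have "even j" using par True by simp
    then obtain i where i: "j = 2 * i" by (rule evenE)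
    show ?thesis
    proof (cases i)
      case 0
      then show ?thesis unfolding node coeff_linear_factor_mult using True i by simp
    next
      case (Suc i')
      have "coeff (node_poly x K l) j = coeff ?E (2 * i')"
        unfolding node coeff_linear_factor_mult using True i Suc odd by simp
      moreover have "(K - j) div 2 = (K + 1) div 2 - 1 - i'" unfolding h i Suc by simp
      ultimately show ?thesis using sign[of i'] by simp
    qed
  next
    case False
    obtain h where h: "K = 2 * h + 1" using False by (rule oddE)
    have "odd j" using par False by simp
    then obtain i where i: "j = 2 * i + 1" by (rule oddE)
    have "coeff (node_poly x K l) j = coeff ?E (2 * i)"
      unfolding node coeff_linear_factor_mult using False i odd by simp
    moreover have "(K - j) div 2 = (K + 1) div 2 - 1 - i" unfolding h i by simp
    ultimately show ?thesis using sign[of i] by simp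
  qed
qed

lemma coeff_node_poly_sign:
  assumes sym: "\<And>m. m \<le> K \<Longrightarrow> x (K - m) = - x m"
    and l: "l \<le> K" and par: "even (K + j)"
  shows "(-1) ^ ((K - j) div 2) * coeff (node_poly x K l) j \<ge> 0"
proof (cases "2 * l = K")
  case True
  then obtain h where h: "K = 2 * h" by blast
  have "even j" using par h by simp
  then obtain i where i: "j = 2 * i" by (rule evenE)
  have "finite {m::nat. 2 * m < K}" by (rule finite_subset[of _ "{..<K}"]) auto
  then have "(-1) ^ (card {m. 2 * m < K} - i) * coeff (\<Prod>m | 2 * m < K. [:- (x m)\<^sup>2, 0, 1:]) (2 * i) \<ge> 0"
    by (rule coeff_prod_shifted_squares_sign) simp
  moreover have "card {m::nat. 2 * m < K} - i = (K - j) div 2" unfolding card_double_less h i by simp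
  moreover have "node_poly x K l = (\<Prod>m | 2 * m < K. [:- (x m)\<^sup>2, 0, 1:])"
    using sym True by (rule node_poly_center)
  ultimately show ?thesis unfolding i by simp
next
  case False
  with sym l par show ?thesis by (intro coeff_node_poly_off_center_sign)
qed

lemma node_poly_at_node_sign:
  assumes dec: "strict_antimono_on {0..K} x" and l: "l \<le> K"
  shows "(-1) ^ l * poly (node_poly x K l) (x l) > 0"
proof -
  have lt: "x b < x a" if "a < b" "b \<le> K" for a b
    using dec that by (auto simp: monotone_on_def)
  have split: "{0..K} - {l} = {0..<l} \<union> {Suc l..K}" using l by auto
  have "poly (node_poly x K l) (x l) = (\<Prod>m\<in>{0..<l}. x l - x m) * (\<Prod>m\<in>{Suc l..K}. x l - x m)"
    unfolding poly_node_poly split by (rule prod.union_disjoint) auto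
  also have "(\<Prod>m\<in>{0..<l}. x l - x m) = (-1) ^ l * (\<Prod>m\<in>{0..<l}. x m - x l)"
    using prod_uminus[of "\<lambda>m. x m - x l" "{0..<l}"] by simp
  finally have eq: "(-1) ^ l * poly (node_poly x K l) (x l) =
      (\<Prod>m\<in>{0..<l}. x m - x l) * (\<Prod>m\<in>{Suc l..K}. x l - x m)"
    by (simp add: mult.assoc[symmetric] power_mult_distrib[symmetric])
  have "(\<Prod>m\<in>{0..<l}. x m - x l) > 0" using lt l by (intro prod_pos) auto
  moreover have "(\<Prod>m\<in>{Suc l..K}. x l - x m) > 0" using lt by (intro prod_pos) auto
  ultimately show ?thesis unfolding eq by simp
qed

text \<open>The \<open>j\<close>-th coefficients of the Lagrange
  basis polynomials all have the sign of \<open>(-1) ^ l\<close> times a common sign, so their absolute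
  values add up to \<open>\<bar>\<Sum>l. (-1) ^ l * coeff (lagrange_basis x K l) j\<bar> = \<bar>coeff T j\<bar>\<close>.\<close>

lemma sum_abs_coeff_lagrange_basis_le:
  assumes sym: "\<And>m. m \<le> K \<Longrightarrow> x (K - m) = - x m"
    and dec: "strict_antimono_on {0..K} x"
    and j: "j \<le> K" and par: "even (K + j)"
    and degT: "degree T \<le> K" and T: "\<And>l. l \<le> K \<Longrightarrow> poly T (x l) = (-1) ^ l"
  shows "(\<Sum>l\<le>K. \<bar>coeff (lagrange_basis x K l) j\<bar>) \<le> \<bar>coeff T j\<bar>"
proof -
  have inj: "inj_on x {0..K}" using dec strict_antimono_iff_antimono by blast
  define \<sigma> :: real where "\<sigma> = (-1) ^ ((K - j) div 2)"
  have abs_\<sigma>: "\<bar>\<sigma>\<bar> = 1" unfolding \<sigma>_def by simp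
  have each: "\<bar>coeff (lagrange_basis x K l) j\<bar> = \<sigma> * (coeff (lagrange_basis x K l) j * (-1) ^ l)"
    if l: "l \<le> K" for l
  proof -
    define D where "D = poly (node_poly x K l) (x l)"
    have D: "(-1) ^ l * D > 0" unfolding D_def using dec l by (rule node_poly_at_node_sign)
    have c: "\<sigma> * coeff (node_poly x K l) j \<ge> 0"
      unfolding \<sigma>_def using sym l par by (rule coeff_node_poly_sign)
    have "\<sigma> * (coeff (lagrange_basis x K l) j * (-1) ^ l) = (\<sigma> * coeff (node_poly x K l) j) / ((-1) ^ l * D)"
      unfolding lagrange_basis_def D_def[symmetric]
      by (cases "even l") (auto simp: field_simps minus_one_power_iff)
    then have "\<sigma> * (coeff (lagrange_basis x K l) j * (-1) ^ l) \<ge> 0" using c D by simp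
    moreover have "\<bar>\<sigma> * (coeff (lagrange_basis x K l) j * (-1) ^ l)\<bar> = \<bar>coeff (lagrange_basis x K l) j\<bar>"
      using abs_\<sigma> by (simp add: abs_mult)
    ultimately show ?thesis by simp
  qed
  have "(\<Sum>l\<le>K. \<bar>coeff (lagrange_basis x K l) j\<bar>) = \<sigma> * (\<Sum>l\<le>K. coeff (lagrange_basis x K l) j * (-1) ^ l)"
    using each by (simp add: sum_distrib_left)
  also have "(\<Sum>l\<le>K. coeff (lagrange_basis x K l) j * (-1) ^ l) =
      coeff (\<Sum>l\<le>K. smult (poly T (x l)) (lagrange_basis x K l)) j"
    by (simp add: coeff_sum T mult.commute)
  also have "(\<Sum>l\<le>K. smult (poly T (x l)) (lagrange_basis x K l)) = T"
    using lagrange_interpolation[OF inj degT] by simp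
  also have "\<sigma> * coeff T j \<le> \<bar>coeff T j\<bar>" using abs_\<sigma> by (metis abs_ge_self abs_mult mult_1)
  finally show ?thesis .
qed

definition cheb_node :: "nat \<Rightarrow> nat \<Rightarrow> real" where
  "cheb_node K l = cos (real l * pi / real K)"

lemma strict_antimono_cheb_node:
  assumes "K > 0"
  shows "strict_antimono_on {0..K} (cheb_node K)"
proof (rule monotone_onI)
  fix a b assume ab: "a \<in> {0..K}" "b \<in> {0..K}" "a < b"
  have "real a * pi / real K < real b * pi / real K" using assms ab by (simp add: divide_strict_right_mono)
  moreover have "real b * pi / real K \<le> pi" using assms ab by (simp add: field_simps)
  ultimately show "cheb_node K b < cheb_node K a"
    unfolding cheb_node_def by (subst cos_mono_less_eq) (auto simp: field_simps)
qed

lemma inj_on_cheb_node: "inj_on (cheb_node K) {0..K}"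
proof (cases "K = 0")
  case False
  then show ?thesis using strict_antimono_cheb_node strict_antimono_iff_antimono by blast
qed simp

lemma cheb_node_reflect:
  assumes "K > 0" "m \<le> K"
  shows "cheb_node K (K - m) = - cheb_node K m"
proof -
  have "real (K - m) * pi / real K = pi - real m * pi / real K"
    using assms by (simp add: field_simps of_nat_diff)
  then show ?thesis unfolding cheb_node_def by simp
qed

lemma poly_chebyshev_cheb_node:
  assumes "K > 0"
  shows "poly (chebyshev K) (cheb_node K l) = (-1) ^ l"
proof -
  have "real K * (real l * pi / real K) = real l * pi" using assms by simp
  then show ?thesis unfolding cheb_node_def poly_chebyshev_cos by simp
qed

lemma abs_cheb_node_le_1: "\<bar>cheb_node K l\<bar> \<le> 1"
  unfolding cheb_node_def by simp

lemma sum_abs_coeff_lagrange_cheb_node_le: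
  assumes j: "j \<le> K" and par: "even (K + j)"
  shows "(\<Sum>l\<le>K. \<bar>coeff (lagrange_basis (cheb_node K) K l) j\<bar>) \<le> coeff (chebyshev_abs K) j"
proof (cases "K = 0")
  case True
  then show ?thesis using j by (simp add: lagrange_basis_def node_poly_def)
next
  case False
  then have "(\<Sum>l\<le>K. \<bar>coeff (lagrange_basis (cheb_node K) K l) j\<bar>) \<le> \<bar>coeff (chebyshev K) j\<bar>"
    by (intro sum_abs_coeff_lagrange_basis_le[OF _ _ j par degree_chebyshev]
          cheb_node_reflect strict_antimono_cheb_node poly_chebyshev_cheb_node) auto
  then show ?thesis by (simp add: coeff_chebyshev_abs)
qed

lemma cheb_node_weights:
  fixes r :: real
  assumes j: "j \<le> K" and par: "even (K + j)" and r: "r > 0"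
  defines "w l \<equiv> coeff (lagrange_basis (cheb_node K) K l) j / r ^ j"
  shows "\<And>m. m \<le> K \<Longrightarrow> (\<Sum>l\<le>K. w l * (r * cheb_node K l) ^ m) = (if j = m then 1 else 0)"
    and "(\<Sum>l\<le>K. \<bar>w l\<bar>) \<le> coeff (chebyshev_abs K) j * (1 / r) ^ j"
proof -
  fix m assume m: "m \<le> K"
  have "(\<Sum>l\<le>K. w l * (r * cheb_node K l) ^ m) =
        r ^ m / r ^ j * (\<Sum>l\<le>K. coeff (lagrange_basis (cheb_node K) K l) j * cheb_node K l ^ m)"
    unfolding w_def by (simp add: sum_distrib_left power_mult_distrib field_simps)
  also have "(\<Sum>l\<le>K. coeff (lagrange_basis (cheb_node K) K l) j * cheb_node K l ^ m) = (if j = m then 1 else 0)"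
    using inj_on_cheb_node m by (rule sum_coeff_lagrange_basis_power)
  finally show "(\<Sum>l\<le>K. w l * (r * cheb_node K l) ^ m) = (if j = m then 1 else 0)" using r by simp
next
  have "(\<Sum>l\<le>K. \<bar>w l\<bar>) = (\<Sum>l\<le>K. \<bar>coeff (lagrange_basis (cheb_node K) K l) j\<bar>) * (1 / r) ^ j"
    unfolding w_def using r by (simp add: sum_divide_distrib abs_divide power_one_over)
  also have "\<dots> \<le> coeff (chebyshev_abs K) j * (1 / r) ^ j"
    using r by (intro mult_right_mono sum_abs_coeff_lagrange_cheb_node_le j par) auto
  finally show "(\<Sum>l\<le>K. \<bar>w l\<bar>) \<le> coeff (chebyshev_abs K) j * (1 / r) ^ j" .
qed

lemma poly_eq_sum_coeff_atMost:
  fixes p :: "real poly"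
  assumes "degree p \<le> N"
  shows "poly p x = (\<Sum>i\<le>N. coeff p i * x ^ i)"
proof -
  have "(\<Sum>i\<le>degree p. coeff p i * x ^ i) = (\<Sum>i\<le>N. coeff p i * x ^ i)"
    using assms by (intro sum.mono_neutral_left) (auto simp: coeff_eq_0)
  then show ?thesis by (simp add: poly_altdef)
qed

lemma sum_coeff_chebyshev_abs_parity_le_exp:
  fixes u :: real
  assumes u: "u \<ge> 0"
  shows "(\<Sum>j\<le>k. coeff (chebyshev_abs (if even (k + j) then k else Suc k)) j * u ^ j) \<le> exp (2 * real k * u)"
proof (cases "k = 0")
  case False
  have "(\<Sum>j\<le>k. coeff (chebyshev_abs (if even (k + j) then k else Suc k)) j * u ^ j) \<le>
        (\<Sum>j\<le>k. coeff (chebyshev_abs k) j * u ^ j) + (\<Sum>j\<le>k. coeff (chebyshev_abs (Suc k)) j * u ^ j)"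
    unfolding sum.distrib[symmetric] using u by (intro sum_mono) (auto simp: coeff_chebyshev_abs)
  also have "(\<Sum>j\<le>k. coeff (chebyshev_abs (Suc k)) j * u ^ j) \<le> (\<Sum>j\<le>Suc k. coeff (chebyshev_abs (Suc k)) j * u ^ j)"
    using u by (simp add: coeff_chebyshev_abs)
  also have "(\<Sum>j\<le>k. coeff (chebyshev_abs k) j * u ^ j) + (\<Sum>j\<le>Suc k. coeff (chebyshev_abs (Suc k)) j * u ^ j) =
      poly (chebyshev_abs k) u + poly (chebyshev_abs (Suc k)) u"
    by (simp only: poly_eq_sum_coeff_atMost[OF degree_chebyshev_abs])
  also have "\<dots> \<le> exp (2 * real k * u)"
    using False u by (intro poly_chebyshev_abs_add_Suc_le_exp) auto
  finally show ?thesis by simp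
qed simp

lemma sum_pushforward_mult:
  fixes c :: "'i \<Rightarrow> real" and g :: "'a \<Rightarrow> real"
  assumes "finite I" "finite G" "p ` I \<subseteq> G"
  shows "(\<Sum>t\<in>G. (\<Sum>i\<in>{i\<in>I. p i = t}. c i) * g t) = (\<Sum>i\<in>I. c i * g (p i))"
proof -
  have "(\<Sum>t\<in>G. (\<Sum>i\<in>{i\<in>I. p i = t}. c i) * g t) = (\<Sum>t\<in>G. \<Sum>i\<in>{i\<in>I. p i = t}. c i * g (p i))"
    by (auto simp: sum_distrib_right intro!: sum.cong)
  also have "\<dots> = (\<Sum>i\<in>I. c i * g (p i))" using assms by (rule sum.group)
  finally show ?thesis .
qed

lemma sum_abs_pushforward_le:
  fixes c :: "'i \<Rightarrow> real"
  assumes "finite I" "finite G" "p ` I \<subseteq> G"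
  shows "(\<Sum>t\<in>G. \<bar>\<Sum>i\<in>{i\<in>I. p i = t}. c i\<bar>) \<le> (\<Sum>i\<in>I. \<bar>c i\<bar>)"
proof -
  have "(\<Sum>t\<in>G. \<bar>\<Sum>i\<in>{i\<in>I. p i = t}. c i\<bar>) \<le> (\<Sum>t\<in>G. \<Sum>i\<in>{i\<in>I. p i = t}. \<bar>c i\<bar>)"
    by (intro sum_mono sum_abs)
  also have "\<dots> = (\<Sum>i\<in>I. \<bar>c i\<bar>)" using assms by (rule sum.group)
  finally show ?thesis .
qed

text \<open>The weights \<open>\<nu> j\<close> represent \<open>p \<mapsto> coeff p j\<close> on polynomials of degree \<open>\<le> k\<close>.
  They come from the Lagrange basis at the Chebyshev nodes of degree \<open>k\<close> or \<open>k + 1\<close>,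
  whichever has the parity of \<open>j\<close>; by Markov's bound their total mass is at most
  \<open>\<Sum>j. coeff (chebyshev_abs K\<^sub>j) j / r ^ j \<le> exp (2 * k / r)\<close>.\<close>

lemma interval_dual_moment_weights:
  fixes r :: real
  assumes r: "r > 0"
  obtains G \<nu> where "finite G" "G \<subseteq> {-r..r}"
    "\<And>j m. j \<le> k \<Longrightarrow> m \<le> k \<Longrightarrow> (\<Sum>t\<in>G. \<nu> j t * t ^ m) = (if j = m then 1 else 0)"
    "(\<Sum>j\<le>k. \<Sum>t\<in>G. \<bar>\<nu> j t\<bar>) \<le> exp (2 * real k / r)"
proof -
  define K where "K j = (if even (k + j) then k else Suc k)" for j
  define y where "y j l = r * cheb_node (K j) l" for j l
  define w where "w j l = coeff (lagrange_basis (cheb_node (K j)) (K j) l) j / r ^ j" for j l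
  define G where "G = (\<lambda>l. r * cheb_node k l) ` {..k} \<union> (\<lambda>l. r * cheb_node (Suc k) l) ` {..Suc k}"
  define \<nu> where "\<nu> j t = (\<Sum>l\<in>{l\<in>{..K j}. y j l = t}. w j l)" for j t
  have K: "j \<le> K j" "k \<le> K j" "even (K j + j)" if "j \<le> k" for j
    using that unfolding K_def by auto
  have fin: "finite G" unfolding G_def by simp
  have yG: "y j ` {..K j} \<subseteq> G" for j
    unfolding y_def G_def K_def by auto
  have "r * cheb_node K l \<in> {-r..r}" for K l
  proof -
    have "r * (-1) \<le> r * cheb_node K l" "r * cheb_node K l \<le> r * 1"
      using r abs_cheb_node_le_1[of K l] by (intro mult_left_mono; simp add: abs_le_iff)+
    then show ?thesis by simp
  qed
  then have "G \<subseteq> {-r..r}" unfolding G_def by auto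
  moreover have "(\<Sum>t\<in>G. \<nu> j t * t ^ m) = (if j = m then 1 else 0)" if "j \<le> k" "m \<le> k" for j m
  proof -
    have "(\<Sum>t\<in>G. \<nu> j t * t ^ m) = (\<Sum>l\<le>K j. w j l * y j l ^ m)"
      unfolding \<nu>_def using fin yG by (intro sum_pushforward_mult) auto
    also have "\<dots> = (if j = m then 1 else 0)"
      unfolding w_def y_def by (rule cheb_node_weights(1)) (use K[OF that(1)] that r in auto)
    finally show ?thesis .
  qed
  moreover have "(\<Sum>j\<le>k. \<Sum>t\<in>G. \<bar>\<nu> j t\<bar>) \<le> exp (2 * real k / r)"
  proof -
    have "(\<Sum>t\<in>G. \<bar>\<nu> j t\<bar>) \<le> coeff (chebyshev_abs (K j)) j * (1 / r) ^ j" if "j \<le> k" for j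
    proof -
      have "(\<Sum>t\<in>G. \<bar>\<nu> j t\<bar>) \<le> (\<Sum>l\<le>K j. \<bar>w j l\<bar>)"
        unfolding \<nu>_def using fin yG by (intro sum_abs_pushforward_le) auto
      also have "\<dots> \<le> coeff (chebyshev_abs (K j)) j * (1 / r) ^ j"
        unfolding w_def using K[OF that] r by (intro cheb_node_weights(2)) auto
      finally show ?thesis .
    qed
    then have "(\<Sum>j\<le>k. \<Sum>t\<in>G. \<bar>\<nu> j t\<bar>) \<le> (\<Sum>j\<le>k. coeff (chebyshev_abs (K j)) j * (1 / r) ^ j)"
      by (intro sum_mono) auto
    also have "\<dots> \<le> exp (2 * real k * (1 / r))"
      unfolding K_def using r by (intro sum_coeff_chebyshev_abs_parity_le_exp) auto
    finally show ?thesis by simp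
  qed
  ultimately show ?thesis using fin that by blast
qed

section \<open>Atomic signed measures\<close>

definition atomic_measure :: "'a::metric_space set \<Rightarrow> 'a set \<Rightarrow> ('a \<Rightarrow> real) \<Rightarrow> 'a measure" where
  "atomic_measure \<Omega> X f = distr (point_measure X (\<lambda>x. ennreal (f x))) (restrict_space borel \<Omega>) (\<lambda>x. x)"

lemma sets_atomic_measure: "sets (atomic_measure \<Omega> X f) = sets (restrict_space borel \<Omega>)"
  by (simp add: atomic_measure_def)

lemma space_restrict_borel: "space (restrict_space borel \<Omega>) = \<Omega>"
  by (simp add: space_restrict_space)

lemma self_in_sets_restrict_borel: "\<Omega> \<in> sets (restrict_space borel \<Omega>)"
  using sets.top[of "restrict_space borel \<Omega>"] by (simp add: space_restrict_borel)

lemma emeasure_atomic_measure: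
  assumes "finite X" "X \<subseteq> \<Omega>" "A \<in> sets (restrict_space borel \<Omega>)"
  shows "emeasure (atomic_measure \<Omega> X f) A = (\<Sum>a\<in>A \<inter> X. ennreal (f a))"
proof -
  have "emeasure (atomic_measure \<Omega> X f) A = emeasure (point_measure X (\<lambda>x. ennreal (f x))) (A \<inter> X)"
    unfolding atomic_measure_def using assms
    by (subst emeasure_distr) (auto simp: space_restrict_borel space_point_measure)
  also have "\<dots> = (\<Sum>a\<in>A \<inter> X. ennreal (f a))"
    using assms by (intro emeasure_point_measure_finite) auto
  finally show ?thesis .
qed

lemma finite_measure_atomic_measure:
  assumes "finite X" "X \<subseteq> \<Omega>"
  shows "finite_measure (atomic_measure \<Omega> X f)"
proof (rule finite_measureI)
  have "space (atomic_measure \<Omega> X f) = \<Omega>" by (simp add: atomic_measure_def space_restrict_borel)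
  then show "emeasure (atomic_measure \<Omega> X f) (space (atomic_measure \<Omega> X f)) \<noteq> \<infinity>"
    using assms by (simp add: emeasure_atomic_measure[OF assms self_in_sets_restrict_borel])
qed

lemma measure_atomic_measure:
  assumes "finite X" "X \<subseteq> \<Omega>" "\<And>x. f x \<ge> 0"
  shows "measure (atomic_measure \<Omega> X f) \<Omega> = (\<Sum>a\<in>X. f a)"
proof -
  have "emeasure (atomic_measure \<Omega> X f) \<Omega> = ennreal (\<Sum>a\<in>X. f a)"
    using assms
    by (simp add: emeasure_atomic_measure[OF assms(1,2) self_in_sets_restrict_borel] Int_absorb1 sum_nonneg)
  then show ?thesis using assms by (simp add: measure_def sum_nonneg)
qed

lemma integral_atomic_measure:
  assumes "finite X" "X \<subseteq> \<Omega>" "\<And>x. f x \<ge> 0" "g \<in> borel_measurable (restrict_space borel \<Omega>)"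
  shows "integral\<^sup>L (atomic_measure \<Omega> X f) g = (\<Sum>a\<in>X. f a * g a)"
proof -
  have "integral\<^sup>L (atomic_measure \<Omega> X f) g = integral\<^sup>L (point_measure X (\<lambda>x. ennreal (f x))) g"
    unfolding atomic_measure_def using assms
    by (intro integral_distr) (auto simp: space_restrict_borel)
  also have "\<dots> = (\<Sum>a\<in>X. f a *\<^sub>R g a)"
    using assms by (intro lebesgue_integral_point_measure_finite) auto
  finally show ?thesis by simp
qed

definition atomic_signed_measure ::
  "'a::metric_space set \<Rightarrow> 'a set \<Rightarrow> ('a \<Rightarrow> real) \<Rightarrow> 'a measure \<times> 'a measure" where
  "atomic_signed_measure \<Omega> X w =
     (atomic_measure \<Omega> X (\<lambda>x. max (w x) 0), atomic_measure \<Omega> X (\<lambda>x. max (- w x) 0))"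

lemma signed_measure_on_atomic:
  assumes X: "finite X" "X \<subseteq> \<Omega>"
  shows "signed_measure_on \<Omega> (atomic_signed_measure \<Omega> X w)"
  unfolding signed_measure_on_def atomic_signed_measure_def fst_conv snd_conv
proof (intro conjI finite_measure_atomic_measure X sets_atomic_measure)
  define P where "P = {x\<in>X. w x > 0}"
  have P: "P \<in> sets (restrict_space borel \<Omega>)"
    using X by (auto simp: P_def sets_restrict_space finite_imp_closed intro!: image_eqI[of _ _ P])
  moreover have "\<Omega> - P \<in> sets (restrict_space borel \<Omega>)"
    using P sets.compl_sets[of P "restrict_space borel \<Omega>"] by (simp add: space_restrict_borel)
  moreover have "(\<Sum>a\<in>(\<Omega> - P) \<inter> X. max (w a) 0) = 0" "(\<Sum>a\<in>P \<inter> X. max (- w a) 0) = 0"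
    by (auto simp: P_def intro!: sum.neutral)
  ultimately show "\<exists>P\<in>sets (restrict_space borel \<Omega>).
      emeasure (atomic_measure \<Omega> X (\<lambda>x. max (w x) 0)) (\<Omega> - P) = 0 \<and>
      emeasure (atomic_measure \<Omega> X (\<lambda>x. max (- w x) 0)) P = 0"
    using X by (intro bexI[of _ P]) (simp_all add: emeasure_atomic_measure)
qed

lemma tv_norm_atomic:
  assumes "finite X" "X \<subseteq> \<Omega>"
  shows "tv_norm \<Omega> (atomic_signed_measure \<Omega> X w) = (\<Sum>x\<in>X. \<bar>w x\<bar>)"
proof -
  have "tv_norm \<Omega> (atomic_signed_measure \<Omega> X w) = (\<Sum>x\<in>X. max (w x) 0 + max (- w x) 0)"
    unfolding tv_norm_def atomic_signed_measure_def using assms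
    by (simp add: measure_atomic_measure sum.distrib)
  also have "\<dots> = (\<Sum>x\<in>X. \<bar>w x\<bar>)" by (intro sum.cong) auto
  finally show ?thesis .
qed

lemma signed_integral_atomic:
  assumes "finite X" "X \<subseteq> \<Omega>" "g \<in> borel_measurable (restrict_space borel \<Omega>)"
  shows "signed_integral (atomic_signed_measure \<Omega> X w) g = (\<Sum>x\<in>X. w x * g x)"
proof -
  have "signed_integral (atomic_signed_measure \<Omega> X w) g =
      (\<Sum>x\<in>X. max (w x) 0 * g x - max (- w x) 0 * g x)"
    unfolding signed_integral_def atomic_signed_measure_def using assms
    by (simp add: integral_atomic_measure sum_subtractf)
  also have "\<dots> = (\<Sum>x\<in>X. w x * g x)" by (intro sum.cong) (auto simp: max_def algebra_simps)
  finally show ?thesis .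
qed

lemma atomic_family_signed_measure:
  fixes p :: "'i \<Rightarrow> real^'d::finite" and c :: "'i \<Rightarrow> real"
  assumes I: "finite I" and p: "p ` I \<subseteq> \<Omega>"
  obtains \<mu> where "signed_measure_on \<Omega> \<mu>" "tv_norm \<Omega> \<mu> \<le> (\<Sum>i\<in>I. \<bar>c i\<bar>)"
    "\<And>g. g \<in> borel_measurable (restrict_space borel \<Omega>) \<Longrightarrow>
      signed_integral \<mu> g = (\<Sum>i\<in>I. c i * g (p i))"
proof
  define w where "w x = (\<Sum>i\<in>{i\<in>I. p i = x}. c i)" for x
  let ?\<mu> = "atomic_signed_measure \<Omega> (p ` I) w"
  have X: "finite (p ` I)" "p ` I \<subseteq> \<Omega>" using assms by auto
  show "signed_measure_on \<Omega> ?\<mu>" using X by (rule signed_measure_on_atomic)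
  show "tv_norm \<Omega> ?\<mu> \<le> (\<Sum>i\<in>I. \<bar>c i\<bar>)"
    unfolding tv_norm_atomic[OF X] w_def using I by (intro sum_abs_pushforward_le) auto
  fix g :: "real^'d \<Rightarrow> real" assume g: "g \<in> borel_measurable (restrict_space borel \<Omega>)"
  show "signed_integral ?\<mu> g = (\<Sum>i\<in>I. c i * g (p i))"
    unfolding signed_integral_atomic[OF X g] w_def using I by (intro sum_pushforward_mult) auto
qed

section \<open>Approximation by atomic measures\<close>

lemma compact_uniformly_continuous_common_delta:
  fixes \<Phi> :: "('a::metric_space \<Rightarrow> real) set"
  assumes cpt: "compact \<Omega>" and "finite \<Phi>" and cont: "\<And>\<phi>. \<phi> \<in> \<Phi> \<Longrightarrow> continuous_on \<Omega> \<phi>"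
    and \<epsilon>: "\<epsilon> > 0"
  shows "\<exists>\<delta>>0. \<forall>\<phi>\<in>\<Phi>. \<forall>x\<in>\<Omega>. \<forall>y\<in>\<Omega>. dist y x < \<delta> \<longrightarrow> \<bar>\<phi> y - \<phi> x\<bar> < \<epsilon>"
  using assms(2) cont
proof (induction \<Phi> rule: finite_induct)
  case (insert \<psi> \<Phi>)
  obtain \<delta>1 where "\<delta>1 > 0" "\<forall>\<phi>\<in>\<Phi>. \<forall>x\<in>\<Omega>. \<forall>y\<in>\<Omega>. dist y x < \<delta>1 \<longrightarrow> \<bar>\<phi> y - \<phi> x\<bar> < \<epsilon>"
    using insert by auto
  moreover have "uniformly_continuous_on \<Omega> \<psi>"
    using insert.prems cpt by (intro compact_uniformly_continuous) auto
  then obtain \<delta>2 where "\<delta>2 > 0" "\<forall>x\<in>\<Omega>. \<forall>y\<in>\<Omega>. dist y x < \<delta>2 \<longrightarrow> \<bar>\<psi> y - \<psi> x\<bar> < \<epsilon>"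
    unfolding uniformly_continuous_on_def dist_real_def using \<epsilon> by blast
  ultimately show ?case by (intro exI[of _ "min \<delta>1 \<delta>2"]) auto
qed (auto intro: exI[of _ 1])

lemma compact_small_cell_partition:
  fixes \<Omega> :: "'a::metric_space set"
  assumes "compact \<Omega>" "\<delta> > 0"
  obtains n :: nat and A p where "\<And>i. A i \<in> sets (restrict_space borel \<Omega>)" "disjoint_family_on A {..<n}"
    "(\<Union>i<n. A i) = \<Omega>" "\<And>i. i < n \<Longrightarrow> p i \<in> \<Omega>" "\<And>i x. x \<in> A i \<Longrightarrow> dist x (p i) < \<delta>"
proof -
  obtain C where C: "C \<subseteq> \<Omega>" "finite C" "\<Omega> \<subseteq> (\<Union>c\<in>C. ball c \<delta>)"
    using compactE_image[OF assms(1), of \<Omega> "\<lambda>c. ball c \<delta>"] assms(2) by force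
  obtain cs where cs: "set cs = C" using finite_list[OF C(2)] by blast
  define p where "p i = cs ! i" for i
  define A where "A i = \<Omega> \<inter> (ball (p i) \<delta> - (\<Union>j<i. ball (p j) \<delta>))" for i
  have "A i \<in> sets (restrict_space borel \<Omega>)" for i
  proof -
    have "ball (p i) \<delta> - (\<Union>j<i. ball (p j) \<delta>) \<in> sets borel" by auto
    then show ?thesis unfolding sets_restrict_space A_def by blast
  qed
  moreover have "disjoint_family_on A {..<length cs}"
    unfolding disjoint_family_on_def A_def by (auto elim!: nat_neq_iff[THEN iffD1, elim_format])
  moreover have "(\<Union>i<length cs. A i) = \<Omega>"
  proof (intro equalityI subsetI)
    fix x assume x: "x \<in> \<Omega>"
    then obtain c where "c \<in> set cs" "x \<in> ball c \<delta>" using C(3) cs by auto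
    then have "\<exists>i. i < length cs \<and> x \<in> ball (p i) \<delta>" by (auto simp: p_def in_set_conv_nth)
    then obtain i where i: "i < length cs" "x \<in> ball (p i) \<delta>" "\<And>j. j < i \<Longrightarrow> x \<notin> ball (p j) \<delta>"
      using exists_least_iff[of "\<lambda>i. i < length cs \<and> x \<in> ball (p i) \<delta>"] by (metis order.strict_trans)
    then show "x \<in> (\<Union>i<length cs. A i)" using x unfolding A_def by auto
  qed (auto simp: A_def)
  moreover have "p i \<in> \<Omega>" if "i < length cs" for i using that C(1) cs unfolding p_def by auto
  moreover have "dist x (p i) < \<delta>" if "x \<in> A i" for x i using that unfolding A_def by (auto simp: dist_commute)
  ultimately show ?thesis by (rule that)
qed

lemma integral_cell_approx:
  fixes M :: "'a measure" and \<phi> :: "'a \<Rightarrow> real"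
  assumes M: "finite_measure M" and A: "A \<in> sets M" and \<phi>: "integrable M \<phi>"
    and close: "\<And>x. x \<in> A \<Longrightarrow> \<bar>\<phi> x - \<phi> p\<bar> \<le> \<epsilon>"
  shows "\<bar>(\<integral>x. indicator A x * \<phi> x \<partial>M) - measure M A * \<phi> p\<bar> \<le> \<epsilon> * measure M A"
proof -
  interpret finite_measure M by (rule M)
  have int: "integrable M (\<lambda>x. indicator A x * f x)" if "integrable M f" for f :: "'a \<Rightarrow> real"
    using integrable_mult_indicator[OF A that] by simp
  have cst: "(\<integral>x. indicator A x * c \<partial>M) = measure M A * c" for c :: real
    using A by simp
  let ?f = "\<lambda>x. indicator A x * (\<phi> x - \<phi> p)"
  have int_f: "integrable M ?f" by (intro int Bochner_Integration.integrable_diff \<phi>) simp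
  have "(\<integral>x. indicator A x * \<phi> x \<partial>M) - measure M A * \<phi> p = integral\<^sup>L M ?f"
    unfolding cst[symmetric] right_diff_distrib
    by (intro Bochner_Integration.integral_diff[symmetric] int \<phi>) simp
  moreover have "integral\<^sup>L M ?f \<le> (\<integral>x. indicator A x * \<epsilon> \<partial>M)"
    using close by (intro integral_mono int_f int) (auto simp: indicator_def abs_le_iff)
  moreover have "(\<integral>x. indicator A x * (- \<epsilon>) \<partial>M) \<le> integral\<^sup>L M ?f"
    using close by (intro integral_mono int_f int) (force simp: indicator_def abs_le_iff)+
  moreover have "A \<inter> space M = A" using A sets.sets_into_space by blast
  ultimately show ?thesis by (simp add: cst abs_le_iff mult.commute)
qed

lemma integral_eq_sum_cells:
  fixes f :: "'a \<Rightarrow> real" and n :: nat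
  assumes f: "integrable M f" and A: "\<And>i. A i \<in> sets M" "disjoint_family_on A {..<n}"
    and cover: "space M \<subseteq> (\<Union>i<n. A i)"
  shows "integral\<^sup>L M f = (\<Sum>i<n. \<integral>x. indicator (A i) x * f x \<partial>M)"
proof -
  have "integral\<^sup>L M f = (\<integral>x. (\<Sum>i<n. indicator (A i) x * f x) \<partial>M)"
  proof (rule Bochner_Integration.integral_cong[OF refl])
    fix x assume "x \<in> space M"
    then obtain i0 where i0: "i0 < n" "x \<in> A i0" using cover by auto
    have "(\<Sum>i<n. indicator (A i) x * f x) = (\<Sum>i<n. if i = i0 then f x else 0)"
      using i0 A(2) by (intro sum.cong refl) (auto simp: indicator_def disjoint_family_on_def)
    then show "f x = (\<Sum>i<n. indicator (A i) x * f x)" using i0 by simp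
  qed
  also have "\<dots> = (\<Sum>i<n. \<integral>x. indicator (A i) x * f x \<partial>M)"
    using integrable_mult_indicator[OF A(1) f] by (intro Bochner_Integration.integral_sum) simp
  finally show ?thesis .
qed

text \<open>The measure of each cell of a fine partition of \<open>\<Omega>\<close> is moved to one point of the
  cell; uniform continuity of the finitely many test functions controls the error.\<close>

lemma finite_measure_approx_by_atoms:
  fixes M :: "'a::metric_space measure" and \<Phi> :: "('a \<Rightarrow> real) set"
  assumes sets: "sets M = sets (restrict_space borel \<Omega>)" and fin: "finite_measure M" and cpt: "compact \<Omega>"
    and \<Phi>: "finite \<Phi>" "\<And>\<phi>. \<phi> \<in> \<Phi> \<Longrightarrow> continuous_on \<Omega> \<phi>" and \<epsilon>: "\<epsilon> > 0"
  obtains n :: nat and p c where "\<And>i. i < n \<Longrightarrow> p i \<in> \<Omega> \<and> c i \<ge> 0" "(\<Sum>i<n. c i) = measure M \<Omega>"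
    "\<And>\<phi>. \<phi> \<in> \<Phi> \<Longrightarrow> \<bar>integral\<^sup>L M \<phi> - (\<Sum>i<n. c i * \<phi> (p i))\<bar> \<le> \<epsilon> * measure M \<Omega>"
proof -
  interpret finite_measure M by (rule fin)
  have space: "space M = \<Omega>" using sets_eq_imp_space_eq[OF sets] by (simp add: space_restrict_borel)
  obtain \<delta> where \<delta>: "\<delta> > 0"
    "\<And>\<phi> x y. \<phi> \<in> \<Phi> \<Longrightarrow> x \<in> \<Omega> \<Longrightarrow> y \<in> \<Omega> \<Longrightarrow> dist y x < \<delta> \<Longrightarrow> \<bar>\<phi> y - \<phi> x\<bar> < \<epsilon>"
    using compact_uniformly_continuous_common_delta[OF cpt \<Phi> \<epsilon>] by blast
  obtain A and n :: nat and p where A_sets: "\<And>i. A i \<in> sets (restrict_space borel \<Omega>)"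
    and A: "disjoint_family_on A {..<n}" "(\<Union>i<n. A i) = \<Omega>"
    and p: "\<And>i. i < n \<Longrightarrow> p i \<in> \<Omega>" and small: "\<And>i x. x \<in> A i \<Longrightarrow> dist x (p i) < \<delta>"
    using compact_small_cell_partition[OF cpt \<delta>(1)] by metis
  have A_M: "A i \<in> sets M" for i using A_sets sets by blast
  have cover: "space M \<subseteq> (\<Union>i<n. A i)" using A(2) space by simp
  define c where "c i = measure M (A i)" for i
  have "measure M (\<Union>i<n. A i) = (\<Sum>i<n. measure M (A i))"
    using A_M A(1) by (intro finite_measure_finite_Union) auto
  then have c_sum: "(\<Sum>i<n. c i) = measure M \<Omega>" unfolding c_def A(2) by simp
  moreover have "\<bar>integral\<^sup>L M \<phi> - (\<Sum>i<n. c i * \<phi> (p i))\<bar> \<le> \<epsilon> * measure M \<Omega>" if \<phi>: "\<phi> \<in> \<Phi>" for \<phi>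
  proof -
    obtain B where "\<And>x. x \<in> \<Omega> \<Longrightarrow> \<bar>\<phi> x\<bar> \<le> B"
      using compact_imp_bounded[OF compact_continuous_image[OF \<Phi>(2)[OF \<phi>] cpt]] by (auto simp: bounded_real)
    then have int: "integrable M \<phi>"
      using borel_measurable_continuous_on_restrict[OF \<Phi>(2)[OF \<phi>]] space
      by (intro integrable_const_bound[where B = B] AE_I2) (auto simp: measurable_cong_sets[OF sets])
    have cell: "\<bar>(\<integral>x. indicator (A i) x * \<phi> x \<partial>M) - c i * \<phi> (p i)\<bar> \<le> \<epsilon> * c i" if "i < n" for i
      unfolding c_def using fin A_M int
    proof (rule integral_cell_approx)
      fix x assume "x \<in> A i"
      moreover have "A i \<subseteq> \<Omega>" using A(2) that by blast
      ultimately show "\<bar>\<phi> x - \<phi> (p i)\<bar> \<le> \<epsilon>" using \<delta>(2)[OF \<phi> p[OF that], of x] small by fastforce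
    qed
    have "\<bar>integral\<^sup>L M \<phi> - (\<Sum>i<n. c i * \<phi> (p i))\<bar> \<le>
        (\<Sum>i<n. \<bar>(\<integral>x. indicator (A i) x * \<phi> x \<partial>M) - c i * \<phi> (p i)\<bar>)"
      unfolding integral_eq_sum_cells[OF int A_M A(1) cover]
      by (simp add: sum_subtractf[symmetric] sum_abs)
    also have "\<dots> \<le> (\<Sum>i<n. \<epsilon> * c i)" using cell by (intro sum_mono) auto
    also have "\<dots> = \<epsilon> * measure M \<Omega>" by (simp add: sum_distrib_left[symmetric] c_sum)
    finally show ?thesis .
  qed
  ultimately show ?thesis using p by (intro that[of n p c]) (auto simp: c_def)
qed

section \<open>Reducing the number of atoms\<close>

lemma exists_nontrivial_linear_relation:
  fixes v :: "'i \<Rightarrow> 'a \<Rightarrow> real"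
  assumes "finite S" "finite I" "card I > card S"
  shows "\<exists>\<beta>. (\<exists>i\<in>I. \<beta> i \<noteq> 0) \<and> (\<forall>\<alpha>\<in>S. (\<Sum>i\<in>I. \<beta> i * v i \<alpha>) = 0)"
  using assms
proof (induction S arbitrary: I v rule: finite_induct)
  case empty
  then obtain i where "i \<in> I" by (metis card.empty card_gt_0_iff ex_in_conv)
  then show ?case by (intro exI[of _ "\<lambda>_. 1"]) auto
next
  case (insert s S)
  show ?case
  proof (cases "\<forall>i\<in>I. v i s = 0")
    case True
    obtain \<beta> where "\<exists>i\<in>I. \<beta> i \<noteq> 0" "\<forall>\<alpha>\<in>S. (\<Sum>i\<in>I. \<beta> i * v i \<alpha>) = 0"
      using insert.IH[of I v] insert.prems insert.hyps by auto
    then show ?thesis using True by (intro exI[of _ \<beta>]) auto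
  next
    case False
    then obtain i0 where i0: "i0 \<in> I" "v i0 s \<noteq> 0" by auto
    define I0 where "I0 = I - {i0}"
    define w where "w i \<alpha> = v i \<alpha> - (v i s / v i0 s) * v i0 \<alpha>" for i \<alpha>
    have "card I0 > card S"
      using insert.prems insert.hyps i0 unfolding I0_def by (simp add: card_Diff_singleton)
    then obtain \<gamma> where \<gamma>: "\<exists>i\<in>I0. \<gamma> i \<noteq> 0" "\<forall>\<alpha>\<in>S. (\<Sum>i\<in>I0. \<gamma> i * w i \<alpha>) = 0"
      using insert.IH[of I0 w] insert.prems unfolding I0_def by auto
    define \<beta> where "\<beta> i = (if i = i0 then - (\<Sum>j\<in>I0. \<gamma> j * v j s) / v i0 s else \<gamma> i)" for i
    have split: "(\<Sum>i\<in>I. \<beta> i * v i \<alpha>) = \<beta> i0 * v i0 \<alpha> + (\<Sum>i\<in>I0. \<gamma> i * v i \<alpha>)" for \<alpha>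
    proof -
      have "(\<Sum>i\<in>I. \<beta> i * v i \<alpha>) = \<beta> i0 * v i0 \<alpha> + (\<Sum>i\<in>I0. \<beta> i * v i \<alpha>)"
        unfolding I0_def using i0 insert.prems by (simp add: sum.remove)
      moreover have "(\<Sum>i\<in>I0. \<beta> i * v i \<alpha>) = (\<Sum>i\<in>I0. \<gamma> i * v i \<alpha>)"
        unfolding I0_def \<beta>_def by (intro sum.cong) auto
      ultimately show ?thesis by simp
    qed
    have "(\<Sum>i\<in>I. \<beta> i * v i \<alpha>) = 0" if "\<alpha> \<in> insert s S" for \<alpha>
    proof (cases "\<alpha> = s")
      case True
      then show ?thesis unfolding split using i0 by (simp add: \<beta>_def)
    next
      case False
      have "(\<Sum>i\<in>I0. \<gamma> i * w i \<alpha>) =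
          (\<Sum>i\<in>I0. \<gamma> i * v i \<alpha>) - (\<Sum>i\<in>I0. \<gamma> i * v i s) * (v i0 \<alpha> / v i0 s)"
        unfolding w_def sum_distrib_right sum_subtractf[symmetric] by (intro sum.cong) (auto simp: algebra_simps)
      then show ?thesis unfolding split using \<gamma>(2) False that i0 by (simp add: \<beta>_def algebra_simps)
    qed
    moreover have "\<exists>i\<in>I. \<beta> i \<noteq> 0" using \<gamma>(1) unfolding I0_def \<beta>_def by auto
    ultimately show ?thesis by blast
  qed
qed

text \<open>Moving the weights \<open>c\<close> along \<open>d\<close> until the first of them vanishes: up to that time no
  weight changes sign, so the \<open>\<ell>\<^sup>1\<close> norm changes at the rate \<open>\<Sum>i. sgn (c i) * d i \<le> 0\<close>.\<close>

lemma move_weights_until_zero: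
  fixes c d :: "'i \<Rightarrow> real"
  assumes fin: "finite I" and nz: "\<And>i. i \<in> I \<Longrightarrow> c i \<noteq> 0"
    and d_nz: "\<exists>i\<in>I. d i \<noteq> 0" and d_sgn: "(\<Sum>i\<in>I. sgn (c i) * d i) \<le> 0"
  obtains t i0 where "t \<ge> 0" "i0 \<in> I" "c i0 + t * d i0 = 0"
    "(\<Sum>i\<in>I. \<bar>c i + t * d i\<bar>) \<le> (\<Sum>i\<in>I. \<bar>c i\<bar>)"
proof -
  define Neg where "Neg = {i\<in>I. sgn (c i) * d i < 0}"
  have "Neg \<noteq> {}"
  proof
    assume "Neg = {}"
    then have "\<And>i. i \<in> I \<Longrightarrow> sgn (c i) * d i \<ge> 0" unfolding Neg_def by force
    with d_sgn have "\<And>i. i \<in> I \<Longrightarrow> sgn (c i) * d i = 0"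
      using sum_nonneg_eq_0_iff[OF fin] by (metis (no_types, lifting) antisym sum_nonneg)
    then show False using d_nz nz by (auto simp: sgn_zero_iff)
  qed
  define q where "q i = \<bar>c i\<bar> / \<bar>d i\<bar>" for i
  have "Min (q ` Neg) \<in> q ` Neg" using \<open>Neg \<noteq> {}\<close> fin by (intro Min_in) (auto simp: Neg_def)
  then obtain i0 where i0: "i0 \<in> Neg" "q i0 = Min (q ` Neg)" by (metis imageE)
  define t where "t = q i0"
  have t_le: "t \<le> q i" if "i \<in> Neg" for i unfolding t_def i0(2) using fin that by (simp add: Neg_def)
  have t_nonneg: "t \<ge> 0" unfolding t_def q_def by simp
  have expand: "sgn (c i) * (c i + t * d i) = \<bar>c i\<bar> + t * (sgn (c i) * d i)" for i
    by (cases "c i" "0::real" rule: linorder_cases) (auto simp: algebra_simps)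
  have same_sign: "sgn (c i) * (c i + t * d i) \<ge> 0" if i: "i \<in> I" for i
  proof (cases "i \<in> Neg")
    case True
    then have "sgn (c i) * d i = - \<bar>d i\<bar>" "d i \<noteq> 0"
      using nz[OF i] unfolding Neg_def by (auto simp: sgn_if abs_if split: if_splits)
    moreover have "t * \<bar>d i\<bar> \<le> q i * \<bar>d i\<bar>" using t_le[OF True] by (simp add: mult_right_mono)
    ultimately show ?thesis unfolding expand q_def by simp
  next
    case False
    then show ?thesis unfolding expand using i t_nonneg by (simp add: Neg_def)
  qed
  have "c i0 + t * d i0 = 0"
  proof -
    have "sgn (c i0) * d i0 < 0" "i0 \<in> I" using i0(1) unfolding Neg_def by auto
    then show ?thesis using nz[of i0] unfolding t_def q_def
      by (cases "c i0 > 0") (auto simp: sgn_if field_simps abs_if mult_less_0_iff split: if_splits)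
  qed
  moreover have "(\<Sum>i\<in>I. \<bar>c i + t * d i\<bar>) \<le> (\<Sum>i\<in>I. \<bar>c i\<bar>)"
  proof -
    have "\<bar>c i + t * d i\<bar> = sgn (c i) * (c i + t * d i)" if "i \<in> I" for i
      using same_sign[OF that] nz[OF that] by (cases "c i > 0") (auto simp: sgn_if)
    then have "(\<Sum>i\<in>I. \<bar>c i + t * d i\<bar>) = (\<Sum>i\<in>I. \<bar>c i\<bar>) + t * (\<Sum>i\<in>I. sgn (c i) * d i)"
      by (simp add: expand sum.distrib sum_distrib_left)
    then show ?thesis using t_nonneg d_sgn by (simp add: mult_nonneg_nonpos)
  qed
  ultimately show ?thesis using that t_nonneg i0(1) unfolding Neg_def by blast
qed

lemma reduce_one_atom:
  fixes v :: "'i \<Rightarrow> 'a \<Rightarrow> real"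
  assumes fin: "finite I" "finite S" and big: "card I > card S" and nz: "\<And>i. i \<in> I \<Longrightarrow> c i \<noteq> 0"
  obtains e i0 where "i0 \<in> I" "e i0 = 0" "(\<Sum>i\<in>I. \<bar>e i\<bar>) \<le> (\<Sum>i\<in>I. \<bar>c i\<bar>)"
    "\<And>\<alpha>. \<alpha> \<in> S \<Longrightarrow> (\<Sum>i\<in>I. e i * v i \<alpha>) = (\<Sum>i\<in>I. c i * v i \<alpha>)"
proof -
  obtain \<beta> where \<beta>: "\<exists>i\<in>I. \<beta> i \<noteq> 0" "\<forall>\<alpha>\<in>S. (\<Sum>i\<in>I. \<beta> i * v i \<alpha>) = 0"
    using exists_nontrivial_linear_relation[OF fin(2,1) big, of v] by auto
  define d where "d = (if (\<Sum>i\<in>I. sgn (c i) * \<beta> i) \<le> 0 then \<beta> else (\<lambda>i. - \<beta> i))"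
  have "\<exists>i\<in>I. d i \<noteq> 0" "(\<Sum>i\<in>I. sgn (c i) * d i) \<le> 0"
    using \<beta>(1) unfolding d_def by (auto simp: sum_negf)
  from move_weights_until_zero[OF fin(1) nz this] obtain t i0
    where t: "i0 \<in> I" "c i0 + t * d i0 = 0" "(\<Sum>i\<in>I. \<bar>c i + t * d i\<bar>) \<le> (\<Sum>i\<in>I. \<bar>c i\<bar>)"
    by blast
  have "(\<Sum>i\<in>I. (c i + t * d i) * v i \<alpha>) = (\<Sum>i\<in>I. c i * v i \<alpha>)" if "\<alpha> \<in> S" for \<alpha>
  proof -
    have "(\<Sum>i\<in>I. d i * v i \<alpha>) = 0" using \<beta>(2) that unfolding d_def by (auto simp: sum_negf)
    then show ?thesis by (simp add: distrib_right sum.distrib sum_distrib_left[symmetric] mult.assoc)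
  qed
  then show ?thesis using that[of i0 "\<lambda>i. c i + t * d i"] t by blast
qed

lemma reduce_atoms_to_card:
  fixes v :: "'i \<Rightarrow> 'a \<Rightarrow> real"
  assumes "finite I" "finite S"
  obtains J c' where "J \<subseteq> I" "card J \<le> card S" "(\<Sum>i\<in>J. \<bar>c' i\<bar>) \<le> (\<Sum>i\<in>I. \<bar>c i\<bar>)"
    "\<And>\<alpha>. \<alpha> \<in> S \<Longrightarrow> (\<Sum>i\<in>J. c' i * v i \<alpha>) = (\<Sum>i\<in>I. c i * v i \<alpha>)"
proof -
  have "\<exists>J c'. J \<subseteq> I \<and> card J \<le> card S \<and> (\<Sum>i\<in>J. \<bar>c' i\<bar>) \<le> (\<Sum>i\<in>I. \<bar>c i\<bar>) \<and>
          (\<forall>\<alpha>\<in>S. (\<Sum>i\<in>J. c' i * v i \<alpha>) = (\<Sum>i\<in>I. c i * v i \<alpha>))"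
    using assms(1)
  proof (induction I arbitrary: c rule: finite_psubset_induct)
    case (psubset I)
    show ?case
    proof (cases "card I \<le> card S")
      case False
      obtain e i0 where e: "i0 \<in> I" "e i0 = 0" "(\<Sum>i\<in>I. \<bar>e i\<bar>) \<le> (\<Sum>i\<in>I. \<bar>c i\<bar>)"
        "\<And>\<alpha>. \<alpha> \<in> S \<Longrightarrow> (\<Sum>i\<in>I. e i * v i \<alpha>) = (\<Sum>i\<in>I. c i * v i \<alpha>)"
      proof (cases "\<exists>i0\<in>I. c i0 = 0")
        case False
        then have "\<And>i. i \<in> I \<Longrightarrow> c i \<noteq> 0" by blast
        moreover have "card I > card S" using \<open>\<not> card I \<le> card S\<close> by simp
        ultimately show ?thesis using reduce_one_atom[OF psubset.hyps assms(2), of c v] that by blast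
      qed (use that in auto)
      have drop: "(\<Sum>i\<in>I. f i) = (\<Sum>i\<in>I - {i0}. f i)" if "f i0 = 0" for f :: "'i \<Rightarrow> real"
        using e(1) psubset.hyps that by (simp add: sum.remove)
      obtain J c' where "J \<subseteq> I - {i0}" "card J \<le> card S" "(\<Sum>i\<in>J. \<bar>c' i\<bar>) \<le> (\<Sum>i\<in>I - {i0}. \<bar>e i\<bar>)"
        "\<forall>\<alpha>\<in>S. (\<Sum>i\<in>J. c' i * v i \<alpha>) = (\<Sum>i\<in>I - {i0}. e i * v i \<alpha>)"
        using psubset.IH[of "I - {i0}" e] e(1) by blast
      then show ?thesis using e drop[of "\<lambda>i. \<bar>e i\<bar>"] drop[of "\<lambda>i. e i * v i _"]
        by (intro exI[of _ J] exI[of _ c']) auto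
    qed blast
  qed
  then show ?thesis using that by blast
qed

section \<open>Existence of a minimiser\<close>

lemma signed_measure_approx_by_atoms:
  fixes \<mu> :: "(real^'d::finite) measure \<times> (real^'d) measure" and \<phi> :: "'i \<Rightarrow> real^'d \<Rightarrow> real"
  assumes \<mu>: "signed_measure_on \<Omega> \<mu>" and cpt: "compact \<Omega>"
    and S: "finite S" and \<phi>: "\<And>\<alpha>. \<alpha> \<in> S \<Longrightarrow> continuous_on \<Omega> (\<phi> \<alpha>)" and \<epsilon>: "\<epsilon> > 0"
  obtains n :: nat and p c where "\<And>i. i < n \<Longrightarrow> p i \<in> \<Omega>" "(\<Sum>i<n. \<bar>c i\<bar>) \<le> tv_norm \<Omega> \<mu>"
    "\<And>\<alpha>. \<alpha> \<in> S \<Longrightarrow> \<bar>signed_integral \<mu> (\<phi> \<alpha>) - (\<Sum>i<n. c i * \<phi> \<alpha> (p i))\<bar> \<le> \<epsilon>"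
proof -
  define \<epsilon>' where "\<epsilon>' = \<epsilon> / (tv_norm \<Omega> \<mu> + 1)"
  have tv: "tv_norm \<Omega> \<mu> \<ge> 0" by (simp add: tv_norm_def)
  then have \<epsilon>': "\<epsilon>' > 0" unfolding \<epsilon>'_def using \<epsilon> by simp
  have "finite (\<phi> ` S)" "\<And>f. f \<in> \<phi> ` S \<Longrightarrow> continuous_on \<Omega> f" using S \<phi> by auto
  note \<Phi> = this
  have parts: "sets (fst \<mu>) = sets (restrict_space borel \<Omega>)" "finite_measure (fst \<mu>)"
    "sets (snd \<mu>) = sets (restrict_space borel \<Omega>)" "finite_measure (snd \<mu>)"
    using \<mu> unfolding signed_measure_on_def by auto
  obtain n1 :: nat and p1 c1
    where A1: "\<And>i. i < n1 \<Longrightarrow> p1 i \<in> \<Omega> \<and> c1 i \<ge> 0" "(\<Sum>i<n1. c1 i) = measure (fst \<mu>) \<Omega>"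
      "\<And>f. f \<in> \<phi> ` S \<Longrightarrow> \<bar>integral\<^sup>L (fst \<mu>) f - (\<Sum>i<n1. c1 i * f (p1 i))\<bar> \<le> \<epsilon>' * measure (fst \<mu>) \<Omega>"
    using finite_measure_approx_by_atoms[OF parts(1,2) cpt \<Phi> \<epsilon>'] by blast
  obtain n2 :: nat and p2 c2
    where A2: "\<And>i. i < n2 \<Longrightarrow> p2 i \<in> \<Omega> \<and> c2 i \<ge> 0" "(\<Sum>i<n2. c2 i) = measure (snd \<mu>) \<Omega>"
      "\<And>f. f \<in> \<phi> ` S \<Longrightarrow> \<bar>integral\<^sup>L (snd \<mu>) f - (\<Sum>i<n2. c2 i * f (p2 i))\<bar> \<le> \<epsilon>' * measure (snd \<mu>) \<Omega>"
    using finite_measure_approx_by_atoms[OF parts(3,4) cpt \<Phi> \<epsilon>'] by blast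
  define p where "p i = (if i < n1 then p1 i else p2 (i - n1))" for i
  define c where "c i = (if i < n1 then c1 i else - c2 (i - n1))" for i
  have split: "(\<Sum>i<n1 + n2. f i) = (\<Sum>i<n1. f i) + (\<Sum>i<n2. f (n1 + i))" for f :: "nat \<Rightarrow> real"
    by (induction n2) (simp_all add: add.assoc)
  have "p i \<in> \<Omega>" if "i < n1 + n2" for i using that A1(1) A2(1) unfolding p_def by auto
  moreover have "(\<Sum>i<n1 + n2. \<bar>c i\<bar>) \<le> tv_norm \<Omega> \<mu>"
    using A1 A2 unfolding split c_def tv_norm_def by simp
  moreover have "\<bar>signed_integral \<mu> (\<phi> \<alpha>) - (\<Sum>i<n1 + n2. c i * \<phi> \<alpha> (p i))\<bar> \<le> \<epsilon>" if "\<alpha> \<in> S" for \<alpha>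
  proof -
    have "\<bar>signed_integral \<mu> (\<phi> \<alpha>) - (\<Sum>i<n1 + n2. c i * \<phi> \<alpha> (p i))\<bar> \<le>
          \<epsilon>' * measure (fst \<mu>) \<Omega> + \<epsilon>' * measure (snd \<mu>) \<Omega>"
      using A1(3)[of "\<phi> \<alpha>"] A2(3)[of "\<phi> \<alpha>"] that
      unfolding signed_integral_def split c_def p_def by (simp add: sum_negf)
    also have "\<dots> = \<epsilon>' * tv_norm \<Omega> \<mu>" unfolding tv_norm_def by (simp add: algebra_simps)
    also have "\<dots> \<le> \<epsilon>" unfolding \<epsilon>'_def using \<epsilon> tv by (simp add: field_simps)
    finally show ?thesis .
  qed
  ultimately show ?thesis by (rule that)
qed

lemma pad_atoms:
  fixes p :: "'i \<Rightarrow> 'a" and c :: "'i \<Rightarrow> real"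
  assumes J: "finite J" "card J \<le> N" and p: "p ` J \<subseteq> \<Omega>" and p0: "p0 \<in> \<Omega>"
  obtains P C where "\<And>i. i < N \<Longrightarrow> P i \<in> \<Omega>" "(\<Sum>i<N. \<bar>C i\<bar>) = (\<Sum>i\<in>J. \<bar>c i\<bar>)"
    "\<And>g. (\<Sum>i<N. C i * g (P i)) = (\<Sum>i\<in>J. c i * g (p i))"
proof -
  obtain h where h: "bij_betw h {..<card J} J"
    using ex_bij_betw_nat_finite[OF J(1)] unfolding atLeast0LessThan by blast
  define P where "P i = (if i < card J then p (h i) else p0)" for i
  define C where "C i = (if i < card J then c (h i) else 0)" for i
  have reindex: "(\<Sum>i<N. f i) = (\<Sum>j\<in>J. g j)"
    if "\<And>i. i < card J \<Longrightarrow> f i = g (h i)" "\<And>i. i \<ge> card J \<Longrightarrow> f i = 0" for f g :: "_ \<Rightarrow> real"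
  proof -
    have "(\<Sum>i<N. f i) = (\<Sum>i<card J. f i)"
      using J(2) that(2) by (intro sum.mono_neutral_right) auto
    also have "\<dots> = (\<Sum>i<card J. g (h i))" using that(1) by simp
    also have "\<dots> = (\<Sum>j\<in>J. g j)" by (rule sum.reindex_bij_betw[OF h])
    finally show ?thesis .
  qed
  have "P i \<in> \<Omega>" if "i < N" for i
    using p p0 bij_betwE[OF h] unfolding P_def by auto
  moreover have "(\<Sum>i<N. \<bar>C i\<bar>) = (\<Sum>i\<in>J. \<bar>c i\<bar>)" by (rule reindex) (auto simp: C_def)
  moreover have "(\<Sum>i<N. C i * g (P i)) = (\<Sum>i\<in>J. c i * g (p i))" for g
    by (rule reindex) (auto simp: C_def P_def)
  ultimately show ?thesis by (rule that)
qed

lemma signed_measure_approx_by_card_atoms: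
  fixes \<mu> :: "(real^'d::finite) measure \<times> (real^'d) measure" and \<phi> :: "'i \<Rightarrow> real^'d \<Rightarrow> real"
  assumes \<mu>: "signed_measure_on \<Omega> \<mu>" and cpt: "compact \<Omega>" and ne: "\<Omega> \<noteq> {}"
    and S: "finite S" and \<phi>: "\<And>\<alpha>. \<alpha> \<in> S \<Longrightarrow> continuous_on \<Omega> (\<phi> \<alpha>)" and \<epsilon>: "\<epsilon> > 0"
  obtains P C where "\<And>i. i < card S \<Longrightarrow> P i \<in> \<Omega>" "(\<Sum>i<card S. \<bar>C i\<bar>) \<le> tv_norm \<Omega> \<mu>"
    "\<And>\<alpha>. \<alpha> \<in> S \<Longrightarrow> \<bar>signed_integral \<mu> (\<phi> \<alpha>) - (\<Sum>i<card S. C i * \<phi> \<alpha> (P i))\<bar> \<le> \<epsilon>"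
proof -
  obtain n :: nat and p c where A: "\<And>i. i < n \<Longrightarrow> p i \<in> \<Omega>" "(\<Sum>i<n. \<bar>c i\<bar>) \<le> tv_norm \<Omega> \<mu>"
    "\<And>\<alpha>. \<alpha> \<in> S \<Longrightarrow> \<bar>signed_integral \<mu> (\<phi> \<alpha>) - (\<Sum>i<n. c i * \<phi> \<alpha> (p i))\<bar> \<le> \<epsilon>"
    using signed_measure_approx_by_atoms[where \<phi> = \<phi>, OF \<mu> cpt S \<phi> \<epsilon>] by blast
  obtain J c' where J: "J \<subseteq> {..<n}" "card J \<le> card S" "(\<Sum>i\<in>J. \<bar>c' i\<bar>) \<le> (\<Sum>i<n. \<bar>c i\<bar>)"
    "\<And>\<alpha>. \<alpha> \<in> S \<Longrightarrow> (\<Sum>i\<in>J. c' i * \<phi> \<alpha> (p i)) = (\<Sum>i<n. c i * \<phi> \<alpha> (p i))"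
    using reduce_atoms_to_card[of "{..<n}" S c "\<lambda>i \<alpha>. \<phi> \<alpha> (p i)"] S by blast
  obtain p0 where "p0 \<in> \<Omega>" using ne by blast
  moreover have "finite J" "p ` J \<subseteq> \<Omega>" using J(1) A(1) finite_subset by auto
  ultimately obtain P C where P: "\<And>i. i < card S \<Longrightarrow> P i \<in> \<Omega>"
    and C: "(\<Sum>i<card S. \<bar>C i\<bar>) = (\<Sum>i\<in>J. \<bar>c' i\<bar>)"
    and PC: "\<And>g. (\<Sum>i<card S. C i * g (P i)) = (\<Sum>i\<in>J. c' i * g (p i))"
    using pad_atoms[OF _ J(2), of p \<Omega> p0 c'] by blast
  show ?thesis
  proof (rule that[OF P])
    show "(\<Sum>i<card S. \<bar>C i\<bar>) \<le> tv_norm \<Omega> \<mu>" using C J(3) A(2) by linarith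
    show "\<bar>signed_integral \<mu> (\<phi> \<alpha>) - (\<Sum>i<card S. C i * \<phi> \<alpha> (P i))\<bar> \<le> \<epsilon>" if "\<alpha> \<in> S" for \<alpha>
      using A(3)[OF that] J(4)[OF that] PC[of "\<phi> \<alpha>"] by simp
  qed
qed

lemma compact_family_convergent_subseq:
  fixes f :: "nat \<Rightarrow> nat \<Rightarrow> 'a::metric_space"
  assumes K: "compact K" and f: "\<And>n i. i < N \<Longrightarrow> f n i \<in> K"
  obtains r l where "strict_mono r" "\<And>i. i < N \<Longrightarrow> l i \<in> K \<and> (\<lambda>n. f (r n) i) \<longlonglongrightarrow> l i"
proof -
  have "\<exists>r l. strict_mono r \<and> (\<forall>i<N. l i \<in> K \<and> (\<lambda>n. f (r n) i) \<longlonglongrightarrow> l i)"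
    using f
  proof (induction N)
    case 0
    show ?case by (intro exI[of _ id]) (auto simp: strict_mono_def)
  next
    case (Suc N)
    obtain r l where r: "strict_mono r" "\<And>i. i < N \<Longrightarrow> l i \<in> K \<and> (\<lambda>n. f (r n) i) \<longlonglongrightarrow> l i"
      using Suc by (metis less_SucI)
    have "\<forall>n. f (r n) N \<in> K" using Suc.prems by simp
    then obtain l' r' where r': "l' \<in> K" "strict_mono r'" "((\<lambda>n. f (r n) N) \<circ> r') \<longlonglongrightarrow> l'"
      using seq_compactE[OF compact_imp_seq_compact[OF K]] by metis
    define l2 where "l2 i = (if i = N then l' else l i)" for i
    have "l2 i \<in> K \<and> (\<lambda>n. f ((r \<circ> r') n) i) \<longlonglongrightarrow> l2 i" if "i < Suc N" for i
    proof (cases "i = N")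
      case False
      then have i: "i < N" using that by simp
      have "((\<lambda>n. f (r n) i) \<circ> r') \<longlonglongrightarrow> l i" using r(2)[OF i] r'(2) by (intro LIMSEQ_subseq_LIMSEQ) auto
      then show ?thesis using False r(2)[OF i] by (simp add: l2_def o_def)
    qed (use r' in \<open>simp add: l2_def o_def\<close>)
    moreover have "strict_mono (r \<circ> r')" using r(1) r'(2) by (rule strict_mono_o)
    ultimately show ?case by blast
  qed
  then show ?thesis using that by blast
qed

text \<open>Families of \<open>N\<close> atoms in a compact set whose masses stay bounded have convergent
  subsequences; continuity passes the moment conditions to the limit.\<close>

lemma atoms_limit:
  fixes p :: "nat \<Rightarrow> nat \<Rightarrow> 'a::metric_space" and c :: "nat \<Rightarrow> nat \<Rightarrow> real"
    and \<phi> :: "'i \<Rightarrow> 'a \<Rightarrow> real"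
  assumes cpt: "compact \<Omega>" and \<phi>: "\<And>\<alpha>. \<alpha> \<in> S \<Longrightarrow> continuous_on \<Omega> (\<phi> \<alpha>)"
    and p: "\<And>n i. i < N \<Longrightarrow> p n i \<in> \<Omega>"
    and tv: "\<And>n. (\<Sum>i<N. \<bar>c n i\<bar>) \<le> t + e n"
    and mom: "\<And>n \<alpha>. \<alpha> \<in> S \<Longrightarrow> \<bar>z \<alpha> - (\<Sum>i<N. c n i * \<phi> \<alpha> (p n i))\<bar> \<le> e n"
    and e: "e \<longlonglongrightarrow> 0"
  obtains P C where "\<And>i. i < N \<Longrightarrow> P i \<in> \<Omega>" "(\<Sum>i<N. \<bar>C i\<bar>) \<le> t"
    "\<And>\<alpha>. \<alpha> \<in> S \<Longrightarrow> (\<Sum>i<N. C i * \<phi> \<alpha> (P i)) = z \<alpha>"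
proof -
  obtain B where B: "\<And>n. \<bar>e n\<bar> \<le> B" using convergent_imp_Bseq[OF convergentI[OF e]] by (auto simp: Bseq_def)
  define K where "K = \<Omega> \<times> {-(t + B)..t + B}"
  have "compact K" unfolding K_def using cpt by (intro compact_Times) auto
  moreover have "(p n i, c n i) \<in> K" if "i < N" for n i
  proof -
    have "\<bar>c n i\<bar> \<le> (\<Sum>i<N. \<bar>c n i\<bar>)" using that by (intro member_le_sum) auto
    then have "\<bar>c n i\<bar> \<le> t + B" using tv[of n] B[of n] by linarith
    then show ?thesis using p[OF that] unfolding K_def by auto
  qed
  ultimately obtain r l where r: "strict_mono r"
    and l: "\<And>i. i < N \<Longrightarrow> l i \<in> K \<and> (\<lambda>n. (p (r n) i, c (r n) i)) \<longlonglongrightarrow> l i"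
    using compact_family_convergent_subseq[of K N "\<lambda>n i. (p n i, c n i)"] by blast
  define P where "P i = fst (l i)" for i
  define C where "C i = snd (l i)" for i
  have P: "P i \<in> \<Omega>" "(\<lambda>n. p (r n) i) \<longlonglongrightarrow> P i" if "i < N" for i
    using l[OF that] tendsto_fst unfolding P_def K_def by fastforce+
  have C: "(\<lambda>n. c (r n) i) \<longlonglongrightarrow> C i" if "i < N" for i
    using l[OF that] tendsto_snd unfolding C_def by fastforce
  have e_r: "(\<lambda>n. e (r n)) \<longlonglongrightarrow> 0" using LIMSEQ_subseq_LIMSEQ[OF e r] by (simp add: o_def)
  have "(\<lambda>n. \<Sum>i<N. \<bar>c (r n) i\<bar>) \<longlonglongrightarrow> (\<Sum>i<N. \<bar>C i\<bar>)" by (intro tendsto_sum tendsto_rabs C) simp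
  moreover have "(\<lambda>n. t + e (r n)) \<longlonglongrightarrow> t" using tendsto_add[OF tendsto_const e_r, of t] by simp
  ultimately have "(\<Sum>i<N. \<bar>C i\<bar>) \<le> t" using tv by (intro LIMSEQ_le) auto
  moreover have "(\<Sum>i<N. C i * \<phi> \<alpha> (P i)) = z \<alpha>" if \<alpha>: "\<alpha> \<in> S" for \<alpha>
  proof (rule LIMSEQ_unique)
    show "(\<lambda>n. \<Sum>i<N. c (r n) i * \<phi> \<alpha> (p (r n) i)) \<longlonglongrightarrow> (\<Sum>i<N. C i * \<phi> \<alpha> (P i))"
      using P p by (intro tendsto_sum tendsto_mult C continuous_on_tendsto_compose[OF \<phi>[OF \<alpha>]]) auto
    have "(\<lambda>n. z \<alpha> - (\<Sum>i<N. c (r n) i * \<phi> \<alpha> (p (r n) i))) \<longlonglongrightarrow> 0"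
      using mom[OF \<alpha>] by (intro Lim_null_comparison[OF _ e_r] always_eventually) auto
    then show "(\<lambda>n. \<Sum>i<N. c (r n) i * \<phi> \<alpha> (p (r n) i)) \<longlonglongrightarrow> z \<alpha>"
      using tendsto_diff[OF tendsto_const[of "z \<alpha>"]] by fastforce
  qed
  ultimately show ?thesis using that P by blast
qed

definition moment_feasible ::
  "(real^'d::finite) set \<Rightarrow> ('i \<Rightarrow> real^'d \<Rightarrow> real) \<Rightarrow> 'i set \<Rightarrow> ('i \<Rightarrow> real) \<Rightarrow>
     ((real^'d) measure \<times> (real^'d) measure) set" where
  "moment_feasible \<Omega> \<phi> S z = {\<mu>. signed_measure_on \<Omega> \<mu> \<and> (\<forall>\<alpha>\<in>S. signed_integral \<mu> (\<phi> \<alpha>) = z \<alpha>)}"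

text \<open>Minimising sequences are replaced by atomic measures with \<open>card S\<close> atoms, to which
  the compactness argument above applies.\<close>

lemma moment_feasible_has_min_tv:
  fixes \<phi> :: "'i \<Rightarrow> real^'d::finite \<Rightarrow> real"
  assumes cpt: "compact \<Omega>" and ne: "\<Omega> \<noteq> {}" and S: "finite S"
    and \<phi>: "\<And>\<alpha>. \<alpha> \<in> S \<Longrightarrow> continuous_on \<Omega> (\<phi> \<alpha>)" and F: "moment_feasible \<Omega> \<phi> S z \<noteq> {}"
  shows "\<exists>\<mu>\<in>moment_feasible \<Omega> \<phi> S z. \<forall>\<nu>\<in>moment_feasible \<Omega> \<phi> S z. tv_norm \<Omega> \<mu> \<le> tv_norm \<Omega> \<nu>"
proof -
  let ?F = "moment_feasible \<Omega> \<phi> S z"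
  define t where "t = Inf (tv_norm \<Omega> ` ?F)"
  have bdd: "bdd_below (tv_norm \<Omega> ` ?F)" by (rule bdd_belowI[of _ 0]) (auto simp: tv_norm_def)
  have t_le: "t \<le> tv_norm \<Omega> \<nu>" if "\<nu> \<in> ?F" for \<nu>
    unfolding t_def using bdd that by (intro cInf_lower) auto
  have "\<forall>n. \<exists>p c. (\<forall>i<card S. p i \<in> \<Omega>) \<and> (\<Sum>i<card S. \<bar>c i\<bar>) \<le> t + 1 / real (Suc n) \<and>
      (\<forall>\<alpha>\<in>S. \<bar>z \<alpha> - (\<Sum>i<card S. c i * \<phi> \<alpha> (p i))\<bar> \<le> 1 / real (Suc n))"
  proof
    fix n
    obtain \<mu> where \<mu>: "\<mu> \<in> ?F" "tv_norm \<Omega> \<mu> < t + 1 / real (Suc n)"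
      using cInf_lessD[of "tv_norm \<Omega> ` ?F" "t + 1 / real (Suc n)"] F unfolding t_def by auto
    then have \<mu>F: "signed_measure_on \<Omega> \<mu>" "\<And>\<alpha>. \<alpha> \<in> S \<Longrightarrow> signed_integral \<mu> (\<phi> \<alpha>) = z \<alpha>"
      unfolding moment_feasible_def by auto
    obtain P C where "\<And>i. i < card S \<Longrightarrow> P i \<in> \<Omega>" "(\<Sum>i<card S. \<bar>C i\<bar>) \<le> tv_norm \<Omega> \<mu>"
      "\<And>\<alpha>. \<alpha> \<in> S \<Longrightarrow> \<bar>signed_integral \<mu> (\<phi> \<alpha>) - (\<Sum>i<card S. C i * \<phi> \<alpha> (P i))\<bar> \<le> 1 / real (Suc n)"
      using signed_measure_approx_by_card_atoms[where \<phi> = \<phi>, OF \<mu>F(1) cpt ne S \<phi>, of "1 / real (Suc n)"]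
      by auto
    then show "\<exists>p c. (\<forall>i<card S. p i \<in> \<Omega>) \<and> (\<Sum>i<card S. \<bar>c i\<bar>) \<le> t + 1 / real (Suc n) \<and>
      (\<forall>\<alpha>\<in>S. \<bar>z \<alpha> - (\<Sum>i<card S. c i * \<phi> \<alpha> (p i))\<bar> \<le> 1 / real (Suc n))"
      using \<mu>(2) \<mu>F(2) by (intro exI[of _ P] exI[of _ C]) auto
  qed
  then obtain p c where p: "\<And>n i. i < card S \<Longrightarrow> p n i \<in> \<Omega>"
    and tv: "\<And>n. (\<Sum>i<card S. \<bar>c n i\<bar>) \<le> t + 1 / real (Suc n)"
    and mom: "\<And>n \<alpha>. \<alpha> \<in> S \<Longrightarrow> \<bar>z \<alpha> - (\<Sum>i<card S. c n i * \<phi> \<alpha> (p n i))\<bar> \<le> 1 / real (Suc n)"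
    unfolding choice_iff by blast
  obtain P C where P: "\<And>i. i < card S \<Longrightarrow> P i \<in> \<Omega>" and C: "(\<Sum>i<card S. \<bar>C i\<bar>) \<le> t"
    and PC: "\<And>\<alpha>. \<alpha> \<in> S \<Longrightarrow> (\<Sum>i<card S. C i * \<phi> \<alpha> (P i)) = z \<alpha>"
    using atoms_limit[where \<phi> = \<phi>, OF cpt \<phi> p tv mom LIMSEQ_Suc[OF lim_inverse_n']] by blast
  obtain \<mu> where \<mu>: "signed_measure_on \<Omega> \<mu>" "tv_norm \<Omega> \<mu> \<le> (\<Sum>i<card S. \<bar>C i\<bar>)"
    "\<And>g. g \<in> borel_measurable (restrict_space borel \<Omega>) \<Longrightarrow> signed_integral \<mu> g = (\<Sum>i<card S. C i * g (P i))"
    using atomic_family_signed_measure[of "{..<card S}" P \<Omega> C] P by blast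
  have "\<mu> \<in> ?F"
    using \<mu>(1) \<mu>(3)[OF borel_measurable_continuous_on_restrict[OF \<phi>]] PC
    unfolding moment_feasible_def by auto
  then show ?thesis using \<mu>(2) C t_le by (meson order.trans)
qed

section \<open>An atomic solution with controlled total variation\<close>

lemma continuous_on_monomial: "continuous_on A (monomial \<alpha>)"
  unfolding monomial_def[abs_def] by (intro continuous_intros)

lemma multi_indices_le: "\<alpha> \<in> multi_indices k \<Longrightarrow> \<alpha> i \<le> k"
  using member_le_sum[of i UNIV \<alpha>] by (simp add: multi_indices_def)

lemma multi_indices_subset_PiE: "multi_indices k \<subseteq> PiE UNIV (\<lambda>_. {..k})"
  using multi_indices_le by (auto simp: PiE_UNIV_domain)

lemma finite_multi_indices: "finite (multi_indices k :: ('d::finite \<Rightarrow> nat) set)"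
  by (rule finite_subset[OF multi_indices_subset_PiE]) (simp add: finite_PiE)

lemma abs_le_moment_sup_norm: "\<alpha> \<in> multi_indices k \<Longrightarrow> \<bar>z \<alpha>\<bar> \<le> moment_sup_norm k z"
  unfolding moment_sup_norm_def by (rule Max_ge) (auto simp: finite_multi_indices)

lemma moment_sup_norm_nonneg: "0 \<le> moment_sup_norm k z"
  using abs_le_moment_sup_norm[of "\<lambda>_. 0" k z] by (fastforce simp: multi_indices_def)

definition grid :: "real set \<Rightarrow> (real^'d::finite) set" where
  "grid G = {x. \<forall>i. x $ i \<in> G}"

lemma grid_eq_image_PiE: "grid G = (\<lambda>f. \<chi> i. f i) ` PiE UNIV (\<lambda>_. G)"
proof (intro equalityI subsetI)
  fix x :: "real^'d" assume "x \<in> grid G"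
  then have "(\<lambda>i. x $ i) \<in> PiE UNIV (\<lambda>_. G)" by (simp add: grid_def PiE_UNIV_domain)
  then show "x \<in> (\<lambda>f. \<chi> i. f i) ` PiE UNIV (\<lambda>_. G)" by (intro image_eqI[of _ _ "\<lambda>i. x $ i"]) simp_all
qed (auto simp: grid_def PiE_UNIV_domain)

lemma finite_grid: "finite G \<Longrightarrow> finite (grid G)"
  by (simp add: grid_eq_image_PiE finite_PiE)

lemma sum_grid_prod:
  fixes f :: "'d::finite \<Rightarrow> real \<Rightarrow> real"
  assumes "finite G"
  shows "(\<Sum>x\<in>grid G. \<Prod>i\<in>UNIV. f i (x $ i)) = (\<Prod>i\<in>UNIV. \<Sum>t\<in>G. f i t)"
proof -
  have "inj_on (\<lambda>g. \<chi> i. g i) (PiE (UNIV :: 'd set) (\<lambda>_. G))"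
    by (rule inj_onI) (metis vec_lambda_beta ext)
  then have "(\<Sum>x\<in>grid G. \<Prod>i\<in>UNIV. f i (x $ i)) = (\<Sum>g\<in>PiE UNIV (\<lambda>_. G). \<Prod>i\<in>UNIV. f i (g i))"
    unfolding grid_eq_image_PiE by (simp add: sum.reindex)
  also have "\<dots> = (\<Prod>i\<in>UNIV. \<Sum>t\<in>G. f i t)"
    using assms by (intro prod_sum_PiE[symmetric]) auto
  finally show ?thesis .
qed

lemma sum_grid_tensor_monomial:
  fixes \<nu> :: "nat \<Rightarrow> real \<Rightarrow> real" and \<alpha> \<beta> :: "'d::finite \<Rightarrow> nat"
  assumes G: "finite G"
    and dual: "\<And>j m. j \<le> k \<Longrightarrow> m \<le> k \<Longrightarrow> (\<Sum>t\<in>G. \<nu> j t * t ^ m) = (if j = m then 1 else 0)"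
    and \<alpha>: "\<alpha> \<in> multi_indices k" and \<beta>: "\<beta> \<in> multi_indices k"
  shows "(\<Sum>x\<in>grid G. (\<Prod>i\<in>UNIV. \<nu> (\<alpha> i) (x $ i)) * monomial \<beta> x) = (if \<alpha> = \<beta> then 1 else 0)"
proof -
  have "(\<Sum>x\<in>grid G. (\<Prod>i\<in>UNIV. \<nu> (\<alpha> i) (x $ i)) * monomial \<beta> x) =
        (\<Prod>i\<in>UNIV. \<Sum>t\<in>G. \<nu> (\<alpha> i) t * t ^ \<beta> i)"
    unfolding monomial_def prod.distrib[symmetric] by (rule sum_grid_prod[OF G])
  also have "\<dots> = (\<Prod>i\<in>UNIV. if \<alpha> i = \<beta> i then 1 else 0)"
    using \<alpha> \<beta> by (intro prod.cong refl dual multi_indices_le)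
  also have "\<dots> = (if \<alpha> = \<beta> then 1 else 0)"
    by (auto simp: prod_zero_iff fun_eq_iff)
  finally show ?thesis .
qed

lemma sum_multi_indices_prod_le:
  fixes b :: "nat \<Rightarrow> real"
  assumes b: "\<And>j. b j \<ge> 0"
  shows "(\<Sum>\<alpha>\<in>multi_indices k. \<Prod>i\<in>(UNIV :: 'd::finite set). b (\<alpha> i)) \<le> (\<Sum>j\<le>k. b j) ^ CARD('d)"
proof -
  have "(\<Sum>\<alpha>\<in>multi_indices k. \<Prod>i\<in>(UNIV :: 'd set). b (\<alpha> i)) \<le>
        (\<Sum>\<alpha>\<in>PiE UNIV (\<lambda>_. {..k}). \<Prod>i\<in>(UNIV :: 'd set). b (\<alpha> i))"
    using multi_indices_subset_PiE b by (intro sum_mono2) (auto simp: finite_PiE prod_nonneg)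
  also have "\<dots> = (\<Prod>i\<in>(UNIV :: 'd set). \<Sum>j\<le>k. b j)" by (rule prod_sum_PiE[symmetric]) auto
  finally show ?thesis by simp
qed

lemma grid_subset_cube:
  assumes "G \<subseteq> {-r..r}"
  shows "(grid G :: (real^'d::finite) set) \<subseteq> {x. \<forall>i. \<bar>x $ i\<bar> \<le> r}"
proof
  fix x :: "real^'d" assume "x \<in> grid G"
  then have "x $ i \<in> {-r..r}" for i using assms by (auto simp: grid_def)
  then have "\<bar>x $ i\<bar> \<le> r" for i using abs_le_iff by (metis atLeastAtMost_iff minus_le_iff)
  then show "x \<in> {x. \<forall>i. \<bar>x $ i\<bar> \<le> r}" by simp
qed

definition tensor_weight ::
  "nat \<Rightarrow> (nat \<Rightarrow> real \<Rightarrow> real) \<Rightarrow> (('d::finite \<Rightarrow> nat) \<Rightarrow> real) \<Rightarrow> real^'d \<Rightarrow> real" where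
  "tensor_weight k \<nu> z x = (\<Sum>\<alpha>\<in>multi_indices k. z \<alpha> * (\<Prod>i\<in>UNIV. \<nu> (\<alpha> i) (x $ i)))"

lemma sum_grid_tensor_weight_monomial:
  assumes G: "finite G"
    and dual: "\<And>j m. j \<le> k \<Longrightarrow> m \<le> k \<Longrightarrow> (\<Sum>t\<in>G. \<nu> j t * t ^ m) = (if j = m then 1 else 0)"
    and \<beta>: "\<beta> \<in> multi_indices k"
  shows "(\<Sum>x\<in>grid G. tensor_weight k \<nu> z x * monomial \<beta> x) = z \<beta>"
proof -
  have "(\<Sum>x\<in>grid G. tensor_weight k \<nu> z x * monomial \<beta> x) =
      (\<Sum>\<alpha>\<in>multi_indices k. z \<alpha> * (\<Sum>x\<in>grid G. (\<Prod>i\<in>UNIV. \<nu> (\<alpha> i) (x $ i)) * monomial \<beta> x))"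
    unfolding tensor_weight_def sum_distrib_right sum_distrib_left by (subst sum.swap) (simp add: mult.assoc)
  also have "\<dots> = (\<Sum>\<alpha>\<in>multi_indices k. z \<alpha> * (if \<alpha> = \<beta> then 1 else 0))"
    using sum_grid_tensor_monomial[OF G dual _ \<beta>] by (intro sum.cong refl) auto
  also have "\<dots> = z \<beta>" using \<beta> by (simp add: if_distrib sum.delta finite_multi_indices cong: if_cong)
  finally show ?thesis .
qed

lemma sum_abs_grid_tensor_weight_le:
  fixes z :: "('d::finite \<Rightarrow> nat) \<Rightarrow> real"
  assumes G: "finite G"
  shows "(\<Sum>x\<in>grid G. \<bar>tensor_weight k \<nu> z x\<bar>) \<le>
      moment_sup_norm k z * (\<Sum>j\<le>k. \<Sum>t\<in>G. \<bar>\<nu> j t\<bar>) ^ CARD('d)"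
proof -
  define b where "b j = (\<Sum>t\<in>G. \<bar>\<nu> j t\<bar>)" for j
  have b: "b j \<ge> 0" for j unfolding b_def by (simp add: sum_nonneg)
  have "(\<Sum>x\<in>grid G. \<bar>tensor_weight k \<nu> z x\<bar>) \<le>
      (\<Sum>x\<in>grid G. \<Sum>\<alpha>\<in>multi_indices k. \<bar>z \<alpha>\<bar> * (\<Prod>i\<in>(UNIV :: 'd set). \<bar>\<nu> (\<alpha> i) (x $ i)\<bar>))"
    unfolding tensor_weight_def by (intro sum_mono order.trans[OF sum_abs]) (simp add: abs_mult abs_prod)
  also have "\<dots> = (\<Sum>\<alpha>\<in>multi_indices k. \<bar>z \<alpha>\<bar> * (\<Prod>i\<in>UNIV. b (\<alpha> i)))"
    unfolding b_def sum_grid_prod[OF G, symmetric] sum_distrib_left by (rule sum.swap)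
  also have "\<dots> \<le> (\<Sum>\<alpha>\<in>multi_indices k. moment_sup_norm k z * (\<Prod>i\<in>(UNIV :: 'd set). b (\<alpha> i)))"
    using b by (intro sum_mono mult_right_mono abs_le_moment_sup_norm prod_nonneg) auto
  also have "\<dots> \<le> moment_sup_norm k z * (\<Sum>j\<le>k. b j) ^ CARD('d)"
    unfolding sum_distrib_left[symmetric]
    by (intro mult_left_mono sum_multi_indices_prod_le b moment_sup_norm_nonneg)
  finally show ?thesis unfolding b_def .
qed

lemma atomic_moment_solution:
  fixes r :: real and z :: "('d::finite \<Rightarrow> nat) \<Rightarrow> real"
  assumes r: "r > 0"
  obtains X :: "(real^'d) set" and w where "finite X" "X \<subseteq> {x. \<forall>i. \<bar>x $ i\<bar> \<le> r}"
    "\<And>\<beta>. \<beta> \<in> multi_indices k \<Longrightarrow> (\<Sum>x\<in>X. w x * monomial \<beta> x) = z \<beta>"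
    "(\<Sum>x\<in>X. \<bar>w x\<bar>) \<le> exp (2 * real CARD('d) * real k / r) * moment_sup_norm k z"
proof -
  obtain G \<nu> where G: "finite G" "G \<subseteq> {-r..r}"
    and dual: "\<And>j m. j \<le> k \<Longrightarrow> m \<le> k \<Longrightarrow> (\<Sum>t\<in>G. \<nu> j t * t ^ m) = (if j = m then 1 else 0)"
    and mass: "(\<Sum>j\<le>k. \<Sum>t\<in>G. \<bar>\<nu> j t\<bar>) \<le> exp (2 * real k / r)"
    using interval_dual_moment_weights[OF r] by blast
  have "(\<Sum>x\<in>grid G. \<bar>tensor_weight k \<nu> z x\<bar>) \<le> moment_sup_norm k z * (\<Sum>j\<le>k. \<Sum>t\<in>G. \<bar>\<nu> j t\<bar>) ^ CARD('d)"
    using G(1) by (rule sum_abs_grid_tensor_weight_le)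
  also have "\<dots> \<le> moment_sup_norm k z * exp (2 * real k / r) ^ CARD('d)"
    using mass by (intro mult_left_mono power_mono moment_sup_norm_nonneg) (auto intro: sum_nonneg)
  also have "\<dots> = exp (2 * real CARD('d) * real k / r) * moment_sup_norm k z"
    by (simp add: exp_of_nat_mult[symmetric] mult_ac)
  finally show ?thesis
    using that[OF finite_grid[OF G(1)] grid_subset_cube[OF G(2)]] sum_grid_tensor_weight_monomial[OF G(1) dual]
    by blast
qed

lemma moment_feasible_tv_bound:
  fixes \<Omega> :: "(real^'d::finite) set" and z :: "('d \<Rightarrow> nat) \<Rightarrow> real"
  assumes r: "r > 0" and cube: "{x. \<forall>i. \<bar>x $ i\<bar> \<le> r} \<subseteq> \<Omega>"
  shows "\<exists>\<mu>\<in>moment_feasible \<Omega> monomial (multi_indices k) z.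
           tv_norm \<Omega> \<mu> \<le> exp (2 * real CARD('d) * real k / r) * moment_sup_norm k z"
proof -
  obtain X :: "(real^'d) set" and w where X: "finite X" "X \<subseteq> {x. \<forall>i. \<bar>x $ i\<bar> \<le> r}"
    and mom: "\<And>\<beta>. \<beta> \<in> multi_indices k \<Longrightarrow> (\<Sum>x\<in>X. w x * monomial \<beta> x) = z \<beta>"
    and tv: "(\<Sum>x\<in>X. \<bar>w x\<bar>) \<le> exp (2 * real CARD('d) * real k / r) * moment_sup_norm k z"
    using atomic_moment_solution[where k = k and z = z, OF r] by blast
  have "id ` X \<subseteq> \<Omega>" using X(2) cube by auto
  then obtain \<mu> where \<mu>: "signed_measure_on \<Omega> \<mu>" "tv_norm \<Omega> \<mu> \<le> (\<Sum>x\<in>X. \<bar>w x\<bar>)"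
    "\<And>g. g \<in> borel_measurable (restrict_space borel \<Omega>) \<Longrightarrow> signed_integral \<mu> g = (\<Sum>x\<in>X. w x * g (id x))"
    using atomic_family_signed_measure[OF X(1)] by blast
  have "\<mu> \<in> moment_feasible \<Omega> monomial (multi_indices k) z"
    unfolding moment_feasible_def
    using \<mu>(1) \<mu>(3)[OF borel_measurable_continuous_on_restrict[OF continuous_on_monomial]] mom by simp
  then show ?thesis using \<mu>(2) tv by (intro bexI[of _ \<mu>]) simp_all
qed

theorem mainTheorem8:
  fixes k :: nat and \<Omega> :: "(real^'d::finite) set" and r :: real
    and z :: "('d \<Rightarrow> nat) \<Rightarrow> real"
  assumes "compact \<Omega>"
    and "r > 0"
    and "{x. \<forall>i. \<bar>x $ i\<bar> \<le> r} \<subseteq> \<Omega>"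
  defines "F \<equiv> {\<mu>. signed_measure_on \<Omega> \<mu> \<and>
                  (\<forall>\<alpha>\<in>multi_indices k. signed_integral \<mu> (monomial \<alpha>) = z \<alpha>)}"
  shows "(\<exists>\<mu>\<in>F. \<forall>\<nu>\<in>F. tv_norm \<Omega> \<mu> \<le> tv_norm \<Omega> \<nu>) \<and>
         (\<forall>\<mu>\<in>F. (\<forall>\<nu>\<in>F. tv_norm \<Omega> \<mu> \<le> tv_norm \<Omega> \<nu>) \<longrightarrow>
             tv_norm \<Omega> \<mu> \<le> exp (2 * real CARD('d) * real k / r) * moment_sup_norm k z)"
proof -
  have F: "F = moment_feasible \<Omega> monomial (multi_indices k) z"
    unfolding F_def moment_feasible_def ..
  obtain \<mu>0 where \<mu>0: "\<mu>0 \<in> F" "tv_norm \<Omega> \<mu>0 \<le> exp (2 * real CARD('d) * real k / r) * moment_sup_norm k z"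
    using moment_feasible_tv_bound[OF assms(2,3)] unfolding F by blast
  have "0 \<in> \<Omega>" using assms(2,3) by auto
  then have "\<exists>\<mu>\<in>F. \<forall>\<nu>\<in>F. tv_norm \<Omega> \<mu> \<le> tv_norm \<Omega> \<nu>"
    unfolding F using assms(1) \<mu>0(1)[unfolded F]
    by (intro moment_feasible_has_min_tv finite_multi_indices continuous_on_monomial) auto
  moreover have "tv_norm \<Omega> \<mu> \<le> exp (2 * real CARD('d) * real k / r) * moment_sup_norm k z"
    if "\<mu> \<in> F" "\<forall>\<nu>\<in>F. tv_norm \<Omega> \<mu> \<le> tv_norm \<Omega> \<nu>" for \<mu>
    using that(2) \<mu>0 by (meson order.trans)
  ultimately show ?thesis by blast
qed

end
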